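(* Let $\mathscr M$ be a type $II_1$ factor and $n\in\mathbb N$. On $M_n(\mathscr M)$, the topology $\mathcal P$ (the product topology obtained by viewing $M_n(\mathscr M)$ as $\mathscr M\times\cdots\times\mathscr M$ ($n^2$ factors), each factor carrying the measure topology of $\mathscr M$) and the topology $\mathcal T$ (the measure topology of the $II_1$ factor $M_n(\mathscr M)$) are equivalent.
   Context: For a $II_1$ factor $\mathscr N$ with unique faithful normal tracial state $\tau_{\mathscr N}$ and $\varepsilon,\delta>0$, $\mathcal O_{\tau_{\mathscr N}}(\varepsilon,\delta)$ is the set of $A\in\mathscr N$ for which some projection $E\in\mathscr N$ satisfies $\|AE\|\le\varepsilon$ and $\tau_{\mathscr N}(I-E)\le\delta$; the measure topology on $\mathscr N$ is the translation-invariant topology with these sets as a fundamental system of neighborhoods of $0$. Here $\mathscr M$ has trace $\tau$, and $M_n(\mathscr M)$ acts on $\oplus_{i=1}^n\mathscr H$ by matrix action, with normalized trace $\tau_n(\mathbf A)=\frac1n\sum_i\tau(A_{ii})$. *)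

theory Defs
  imports "HOL-Analysis.Analysis"
begin

text \<open>A complex Hilbert space H is represented by a real Hilbert space (type class
  real_inner + complete_space) together with an operator J (multiplication by i) with
  J o J = -I and J orthogonal.  The complex inner product is then
  <x,y>_C = x.y + i (x.(J y))  and complex scalar multiplication is (a+ib)x = a x + b J x.\<close>

definition complex_structure :: "('h::{real_inner,complete_space}) \<Rightarrow>\<^sub>L 'h \<Rightarrow> bool" where
  "complex_structure J \<longleftrightarrow> J o\<^sub>L J = - id_blinfun \<and> (\<forall>x y. inner (J x) (J y) = inner x y)"

text \<open>B(H): bounded complex-linear operators = bounded real-linear operators commuting with J.\<close>
definition cplx_ops :: "('h::{real_inner,complete_space}) \<Rightarrow>\<^sub>L 'h \<Rightarrow> ('h \<Rightarrow>\<^sub>L 'h) set" where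
  "cplx_ops J = {T. T o\<^sub>L J = J o\<^sub>L T}"

definition cscale :: "('h::{real_inner,complete_space}) \<Rightarrow>\<^sub>L 'h \<Rightarrow> complex \<Rightarrow> ('h \<Rightarrow>\<^sub>L 'h) \<Rightarrow> ('h \<Rightarrow>\<^sub>L 'h)" where
  "cscale J c T = Re c *\<^sub>R T + Im c *\<^sub>R (J o\<^sub>L T)"

definition adj :: "('h::{real_inner,complete_space}) \<Rightarrow>\<^sub>L 'h \<Rightarrow> 'h \<Rightarrow>\<^sub>L 'h" where
  "adj T = Blinfun (adjoint (blinfun_apply T))"

definition commutant :: "('h::{real_inner,complete_space}) \<Rightarrow>\<^sub>L 'h \<Rightarrow> ('h \<Rightarrow>\<^sub>L 'h) set \<Rightarrow> ('h \<Rightarrow>\<^sub>L 'h) set" where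
  "commutant J S = {T \<in> cplx_ops J. \<forall>A\<in>S. T o\<^sub>L A = A o\<^sub>L T}"

definition von_neumann_algebra :: "('h::{real_inner,complete_space}) \<Rightarrow>\<^sub>L 'h \<Rightarrow> ('h \<Rightarrow>\<^sub>L 'h) set \<Rightarrow> bool" where
  "von_neumann_algebra J M \<longleftrightarrow>
     M \<subseteq> cplx_ops J \<and> id_blinfun \<in> M \<and>
     (\<forall>A\<in>M. \<forall>B\<in>M. A + B \<in> M \<and> A o\<^sub>L B \<in> M) \<and>
     (\<forall>c. \<forall>A\<in>M. cscale J c A \<in> M) \<and>
     (\<forall>A\<in>M. adj A \<in> M) \<and>
     commutant J (commutant J M) = M"

definition factor :: "('h::{real_inner,complete_space}) \<Rightarrow>\<^sub>L 'h \<Rightarrow> ('h \<Rightarrow>\<^sub>L 'h) set \<Rightarrow> bool" where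
  "factor J M \<longleftrightarrow> von_neumann_algebra J M \<and>
     M \<inter> commutant J M = {cscale J c id_blinfun | c. True}"

definition pos_op :: "('h::{real_inner,complete_space}) \<Rightarrow>\<^sub>L 'h \<Rightarrow> bool" where
  "pos_op T \<longleftrightarrow> adj T = T \<and> (\<forall>x. 0 \<le> inner (T x) x)"

definition op_le :: "('h::{real_inner,complete_space}) \<Rightarrow>\<^sub>L 'h \<Rightarrow> 'h \<Rightarrow>\<^sub>L 'h \<Rightarrow> bool" where
  "op_le A B \<longleftrightarrow> pos_op (B - A)"

definition is_proj :: "('h::{real_inner,complete_space}) \<Rightarrow>\<^sub>L 'h \<Rightarrow> bool" where
  "is_proj E \<longleftrightarrow> E o\<^sub>L E = E \<and> adj E = E"

definition faithful_normal_tracial_state ::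
  "('h::{real_inner,complete_space}) \<Rightarrow>\<^sub>L 'h \<Rightarrow> ('h \<Rightarrow>\<^sub>L 'h) set \<Rightarrow> (('h \<Rightarrow>\<^sub>L 'h) \<Rightarrow> complex) \<Rightarrow> bool" where
  "faithful_normal_tracial_state J M \<tau> \<longleftrightarrow>
     (\<forall>A\<in>M. \<forall>B\<in>M. \<tau> (A + B) = \<tau> A + \<tau> B) \<and>
     (\<forall>c. \<forall>A\<in>M. \<tau> (cscale J c A) = c * \<tau> A) \<and>
     (\<forall>A\<in>M. pos_op A \<longrightarrow> Im (\<tau> A) = 0 \<and> 0 \<le> Re (\<tau> A)) \<and>
     \<tau> id_blinfun = 1 \<and>
     (\<forall>A\<in>M. \<forall>B\<in>M. \<tau> (A o\<^sub>L B) = \<tau> (B o\<^sub>L A)) \<and>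
     (\<forall>A\<in>M. pos_op A \<and> \<tau> A = 0 \<longrightarrow> A = 0) \<and>
     (\<forall>S A. S \<noteq> {} \<and> S \<subseteq> M \<and> (\<forall>B\<in>S. pos_op B) \<and>
            (\<forall>B\<in>S. \<forall>C\<in>S. \<exists>D\<in>S. op_le B D \<and> op_le C D) \<and>
            A \<in> M \<and> adj A = A \<and> (\<forall>B\<in>S. op_le B A) \<and>
            (\<forall>A'\<in>M. adj A' = A' \<and> (\<forall>B\<in>S. op_le B A') \<longrightarrow> op_le A A')
        \<longrightarrow> Re (\<tau> A) = (SUP B\<in>S. Re (\<tau> B)))"

definition II1_factor :: "('h::{real_inner,complete_space}) \<Rightarrow>\<^sub>L 'h \<Rightarrow> ('h \<Rightarrow>\<^sub>L 'h) set \<Rightarrow> bool" where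
  "II1_factor J M \<longleftrightarrow> complex_structure J \<and> factor J M \<and>
     \<not> (\<exists>B. finite B \<and> M \<subseteq> span B) \<and>
     (\<exists>\<tau>. faithful_normal_tracial_state J M \<tau>)"

definition meas_nbhd ::
  "('h::{real_inner,complete_space} \<Rightarrow>\<^sub>L 'h) set \<Rightarrow> (('h \<Rightarrow>\<^sub>L 'h) \<Rightarrow> complex) \<Rightarrow> real \<Rightarrow> real \<Rightarrow> ('h \<Rightarrow>\<^sub>L 'h) set" where
  "meas_nbhd M \<tau> \<epsilon> \<delta> = {A\<in>M. \<exists>E\<in>M. is_proj E \<and> norm (A o\<^sub>L E) \<le> \<epsilon> \<and> Re (\<tau> (id_blinfun - E)) \<le> \<delta>}"

definition meas_topology ::
  "('h::{real_inner,complete_space} \<Rightarrow>\<^sub>L 'h) set \<Rightarrow> (('h \<Rightarrow>\<^sub>L 'h) \<Rightarrow> complex) \<Rightarrow> ('h \<Rightarrow>\<^sub>L 'h) topology" where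
  "meas_topology M \<tau> = topology (\<lambda>U. U \<subseteq> M \<and>
      (\<forall>A\<in>U. \<exists>\<epsilon>>0. \<exists>\<delta>>0. (\<lambda>B. A + B) ` meas_nbhd M \<tau> \<epsilon> \<delta> \<subseteq> U))"

text \<open>The index set {1..n} is a finite type 'n (n = CARD('n)); matrices are functions on 'n x 'n,
  vectors of the direct sum are functions 'n => 'h.\<close>

type_synonym ('n, 'h) opmat = "'n \<times> 'n \<Rightarrow> ('h \<Rightarrow>\<^sub>L 'h)"

definition mat_alg :: "('h::{real_inner,complete_space} \<Rightarrow>\<^sub>L 'h) set \<Rightarrow> ('n::finite, 'h) opmat set" where
  "mat_alg M = {A. \<forall>ij. A ij \<in> M}"

definition dsum_norm :: "('n::finite \<Rightarrow> 'h::{real_inner,complete_space}) \<Rightarrow> real" where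
  "dsum_norm x = sqrt (\<Sum>i\<in>UNIV. (norm (x i))\<^sup>2)"

definition mat_apply :: "('n::finite, 'h::{real_inner,complete_space}) opmat \<Rightarrow> ('n \<Rightarrow> 'h) \<Rightarrow> ('n \<Rightarrow> 'h)" where
  "mat_apply A x = (\<lambda>i. \<Sum>j\<in>UNIV. A (i, j) (x j))"

definition mat_norm :: "('n::finite, 'h::{real_inner,complete_space}) opmat \<Rightarrow> real" where
  "mat_norm A = Sup {dsum_norm (mat_apply A x) | x. dsum_norm x \<le> 1}"

definition mat_mult :: "('n::finite, 'h::{real_inner,complete_space}) opmat \<Rightarrow> ('n, 'h) opmat \<Rightarrow> ('n, 'h) opmat" where
  "mat_mult A B = (\<lambda>(i, k). \<Sum>j\<in>UNIV. A (i, j) o\<^sub>L B (j, k))"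

definition mat_adj :: "('n::finite, 'h::{real_inner,complete_space}) opmat \<Rightarrow> ('n, 'h) opmat" where
  "mat_adj A = (\<lambda>(i, j). adj (A (j, i)))"

definition mat_id :: "('n::finite, 'h::{real_inner,complete_space}) opmat" where
  "mat_id = (\<lambda>(i, j). if i = j then id_blinfun else 0)"

definition mat_is_proj :: "('n::finite, 'h::{real_inner,complete_space}) opmat \<Rightarrow> bool" where
  "mat_is_proj E \<longleftrightarrow> mat_mult E E = E \<and> mat_adj E = E"

definition mat_trace :: "(('h::{real_inner,complete_space} \<Rightarrow>\<^sub>L 'h) \<Rightarrow> complex) \<Rightarrow> ('n::finite, 'h) opmat \<Rightarrow> complex" where
  "mat_trace \<tau> A = (\<Sum>i\<in>UNIV. \<tau> (A (i, i))) / of_nat CARD('n)"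

definition mat_meas_nbhd ::
  "('h::{real_inner,complete_space} \<Rightarrow>\<^sub>L 'h) set \<Rightarrow> (('h \<Rightarrow>\<^sub>L 'h) \<Rightarrow> complex) \<Rightarrow> real \<Rightarrow> real \<Rightarrow> ('n::finite, 'h) opmat set" where
  "mat_meas_nbhd M \<tau> \<epsilon> \<delta> = {A\<in>mat_alg M. \<exists>E\<in>mat_alg M. mat_is_proj E \<and>
      mat_norm (mat_mult A E) \<le> \<epsilon> \<and> Re (mat_trace \<tau> (\<lambda>ij. mat_id ij - E ij)) \<le> \<delta>}"

definition mat_meas_topology ::
  "('h::{real_inner,complete_space} \<Rightarrow>\<^sub>L 'h) set \<Rightarrow> (('h \<Rightarrow>\<^sub>L 'h) \<Rightarrow> complex) \<Rightarrow> ('n::finite, 'h) opmat topology" where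
  "mat_meas_topology M \<tau> = topology (\<lambda>U. U \<subseteq> mat_alg M \<and>
      (\<forall>A\<in>U. \<exists>\<epsilon>>0. \<exists>\<delta>>0. (\<lambda>B ij. A ij + B ij) ` mat_meas_nbhd M \<tau> \<epsilon> \<delta> \<subseteq> U))"

end

theory Submission
  imports Defs
begin

text \<open>
  Both topologies are translation invariant, so it suffices to compare neighbourhoods of 0.
  If every entry B_ij lies in O(eps, delta) via a projection E_ij, the meet G of all E_ij has
  tau(1 - G) <= sum tau(1 - E_ij), and diag(G, ..., G) puts B into O_n(n^2 eps, n^2 delta).
  Conversely, let E be a projection of M_n(M) with norm (B E) <= eps and tau_n(1 - E) <= delta, and
  let F be the projection onto the kernel of (1 - E)_jj. A vector fixed by F, placed in the j-th
  slot, is fixed by E; hence norm (B_ij F) <= eps, and tau(1 - F) <= sum_l tau((1 - E)_ll) =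
  n tau_n(1 - E).

  Both trace estimates rest on the normality of tau: the support projection 1 - ker_proj X of a
  positive X is the supremum of X (X + e)^-1 as e decreases to 0, and tau(X (X + e)^-1) is bounded via
  cyclicity of the trace and the operator inequality A (X + e)^-1 A* <= 1 whenever A* A <= X.
\<close>

section \<open>Orthogonal projections and the Riesz representation\<close>

lemma parallelogram_law:
  fixes a b :: "'a::real_inner"
  shows "norm (a + b)^2 + norm (a - b)^2 = 2 * norm a ^ 2 + 2 * norm b ^ 2"
  by (simp add: power2_norm_eq_inner inner_diff inner_add algebra_simps inner_commute)

lemma inner_twice_minus_norm_le: "2 * inner a b - norm b ^ 2 \<le> norm (a :: 'a::real_inner) ^ 2"
  using power2_norm_eq_inner[of "a - b"] inner_ge_zero[of "a - b"]
  by (simp add: inner_diff power2_norm_eq_inner inner_commute)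

lemma subspace_near_points_close:
  fixes V :: "'a::real_inner set"
  assumes V: "subspace V" and a: "a \<in> V" and b: "b \<in> V"
  shows "norm (a - b)^2 \<le> 2 * (dist x a ^ 2 - infdist x V ^ 2) + 2 * (dist x b ^ 2 - infdist x V ^ 2)"
proof -
  have "(1/2) *\<^sub>R (a + b) \<in> V"
    using V a b by (simp add: subspace_add subspace_scale)
  then have "infdist x V \<le> norm (x - (1/2) *\<^sub>R (a + b))"
    by (metis dist_norm infdist_le)
  moreover have "(x - a) + (x - b) = 2 *\<^sub>R (x - (1/2) *\<^sub>R (a + b))"
    by (simp add: algebra_simps scaleR_2)
  ultimately have "2 * infdist x V \<le> norm ((x - a) + (x - b))"
    by simp
  then have "(2 * infdist x V) ^ 2 \<le> norm ((x - a) + (x - b)) ^ 2"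
    by (rule power_mono) (simp_all add: infdist_nonneg)
  then have "4 * infdist x V ^ 2 \<le> norm ((x - a) + (x - b)) ^ 2"
    by (simp add: power_mult_distrib)
  with parallelogram_law[of "x - a" "x - b"] show ?thesis
    by (simp add: dist_norm norm_minus_commute)
qed

lemma orthogonal_if_nearest:
  fixes u w :: "'a::real_inner"
  assumes "\<And>t::real. norm u \<le> norm (u - t *\<^sub>R w)"
  shows "inner u w = 0"
proof (cases "w = 0")
  case False
  define t where "t = inner u w / inner w w"
  have "norm u ^ 2 \<le> norm (u - t *\<^sub>R w) ^ 2"
    using assms by (simp add: power_mono)
  also have "\<dots> = norm u ^ 2 - 2 * t * inner u w + t ^ 2 * inner w w"
    unfolding power2_norm_eq_inner by (simp add: inner_diff inner_commute power2_eq_square algebra_simps)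
  also have "\<dots> = norm u ^ 2 - inner u w ^ 2 / inner w w"
    using False by (simp add: t_def power2_eq_square field_simps)
  finally have "inner u w ^ 2 / inner w w \<le> 0" by simp
  moreover have "inner w w > 0" using False by simp
  ultimately show ?thesis
    by (simp add: divide_le_0_iff)
qed simp

lemma minimizing_sequence_exists:
  assumes "S \<noteq> {}"
  obtains v where "\<And>n. v n \<in> S" "(\<lambda>n. dist x (v n)) \<longlonglongrightarrow> infdist x S"
proof -
  define d where "d = infdist x S"
  have "\<exists>v\<in>S. dist x v < d + 1 / Suc n" for n :: nat
  proof -
    have "Inf (dist x ` S) < d + 1 / Suc n"
      using assms by (simp add: d_def infdist_notempty)
    then show ?thesis using cInf_lessD[of "dist x ` S"] assms by auto
  qed
  then obtain v where v: "\<And>n. v n \<in> S" "\<And>n. dist x (v n) < d + 1 / Suc n"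
    by metis
  have "(\<lambda>n. dist x (v n)) \<longlonglongrightarrow> d"
  proof (rule real_tendsto_sandwich[of "\<lambda>_. d" _ _ "\<lambda>n. d + 1 / Suc n"])
    show "\<forall>\<^sub>F n in sequentially. d \<le> dist x (v n)"
      using v(1) by (simp add: d_def infdist_le)
    show "\<forall>\<^sub>F n in sequentially. dist x (v n) \<le> d + 1 / Suc n"
      using v(2) by (simp add: less_imp_le)
    show "(\<lambda>n. d + 1 / Suc n) \<longlonglongrightarrow> d"
      using tendsto_add[OF tendsto_const LIMSEQ_Suc[OF lim_inverse_n']] by simp
  qed simp
  then show ?thesis using that[OF v(1)] by (simp add: d_def)
qed

lemma Cauchy_minimizing_sequence:
  fixes V :: "'a::real_inner set"
  assumes V: "subspace V" and v: "\<And>n. v n \<in> V" and lim: "(\<lambda>n. dist x (v n)) \<longlonglongrightarrow> infdist x V"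
  shows "Cauchy v"
proof (rule metric_CauchyI)
  fix e :: real assume "e > 0"
  have excess: "(\<lambda>n. dist x (v n) ^ 2 - infdist x V ^ 2) \<longlonglongrightarrow> 0"
    using tendsto_diff[OF tendsto_power[OF lim, of 2] tendsto_const[of "infdist x V ^ 2"]] by simp
  obtain N where N: "\<And>n. n \<ge> N \<Longrightarrow> dist x (v n) ^ 2 - infdist x V ^ 2 < e ^ 2 / 4"
    using order_tendstoD(2)[OF excess, of "e ^ 2 / 4"] \<open>e > 0\<close> by (auto simp: eventually_sequentially)
  have "dist (v m) (v n) < e" if "m \<ge> N" "n \<ge> N" for m n
  proof -
    have "dist (v m) (v n) ^ 2 < e ^ 2"
      using subspace_near_points_close[OF V v v, of m n x] N[OF that(1)] N[OF that(2)]
      by (simp add: dist_norm)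
    with \<open>e > 0\<close> show ?thesis by (simp add: power_less_imp_less_base)
  qed
  then show "\<exists>N. \<forall>m\<ge>N. \<forall>n\<ge>N. dist (v m) (v n) < e" by blast
qed

lemma exists_orthogonal_projection:
  fixes V :: "'a::{real_inner,complete_space} set"
  assumes V: "subspace V" "closed V"
  shows "\<exists>y\<in>V. \<forall>w\<in>V. inner (x - y) w = 0"
proof -
  have "V \<noteq> {}" using subspace_0[OF V(1)] by auto
  then obtain v where v: "\<And>n. v n \<in> V" and lim: "(\<lambda>n. dist x (v n)) \<longlonglongrightarrow> infdist x V"
    using minimizing_sequence_exists[of V x] by blast
  then have "Cauchy v" by (rule Cauchy_minimizing_sequence[OF V(1)])
  then obtain y where y: "v \<longlonglongrightarrow> y" using convergent_eq_Cauchy by blast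
  have "y \<in> V" using closed_sequentially[OF V(2)] v y by blast
  have "dist x y = infdist x V"
    using LIMSEQ_unique[OF tendsto_dist[OF tendsto_const y] lim] .
  have "inner (x - y) w = 0" if "w \<in> V" for w
  proof (rule orthogonal_if_nearest)
    fix t :: real
    have "y + t *\<^sub>R w \<in> V" using V(1) \<open>y \<in> V\<close> that by (simp add: subspace_add subspace_scale)
    then have "infdist x V \<le> dist x (y + t *\<^sub>R w)" by (rule infdist_le)
    then show "norm (x - y) \<le> norm (x - y - t *\<^sub>R w)"
      using \<open>dist x y = infdist x V\<close> by (simp add: dist_norm algebra_simps)
  qed
  with \<open>y \<in> V\<close> show ?thesis by blast
qed

definition orthoproj :: "'a::{real_inner,complete_space} set \<Rightarrow> 'a \<Rightarrow> 'a" where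
  "orthoproj V x = (SOME y. y \<in> V \<and> (\<forall>w\<in>V. inner (x - y) w = 0))"

context
  fixes V :: "'a::{real_inner,complete_space} set"
  assumes V: "subspace V" "closed V"
begin

lemma orthoproj_in: "orthoproj V x \<in> V"
  and orthoproj_orthogonal: "w \<in> V \<Longrightarrow> inner (x - orthoproj V x) w = 0"
proof -
  have "orthoproj V x \<in> V \<and> (\<forall>w\<in>V. inner (x - orthoproj V x) w = 0)"
    unfolding orthoproj_def by (rule someI_ex) (use exists_orthogonal_projection[OF V] in blast)
  then show "orthoproj V x \<in> V" "w \<in> V \<Longrightarrow> inner (x - orthoproj V x) w = 0"
    by auto
qed

lemma orthoproj_unique:
  assumes "y \<in> V" "\<And>w. w \<in> V \<Longrightarrow> inner (x - y) w = 0"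
  shows "orthoproj V x = y"
proof -
  have "y - orthoproj V x \<in> V"
    using assms(1) orthoproj_in V(1) by (simp add: subspace_diff)
  then have "inner (x - orthoproj V x) (y - orthoproj V x) = 0" "inner (x - y) (y - orthoproj V x) = 0"
    using orthoproj_orthogonal assms(2) by auto
  then have "inner (y - orthoproj V x) (y - orthoproj V x) = 0"
    by (simp add: inner_diff algebra_simps)
  then show ?thesis by simp
qed

lemma orthoproj_id: "x \<in> V \<Longrightarrow> orthoproj V x = x"
  by (rule orthoproj_unique) auto

lemma orthoproj_eq_0: "(\<And>w. w \<in> V \<Longrightarrow> inner x w = 0) \<Longrightarrow> orthoproj V x = 0"
  by (rule orthoproj_unique) (auto simp: subspace_0[OF V(1)])

lemma orthoproj_add: "orthoproj V (x + y) = orthoproj V x + orthoproj V y"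
proof (rule orthoproj_unique)
  show "orthoproj V x + orthoproj V y \<in> V" using orthoproj_in V(1) by (simp add: subspace_add)
  show "inner (x + y - (orthoproj V x + orthoproj V y)) w = 0" if "w \<in> V" for w
    using orthoproj_orthogonal[OF that, of x] orthoproj_orthogonal[OF that, of y]
    by (simp add: inner_diff_left inner_add_left)
qed

lemma orthoproj_scaleR: "orthoproj V (c *\<^sub>R x) = c *\<^sub>R orthoproj V x"
proof (rule orthoproj_unique)
  show "c *\<^sub>R orthoproj V x \<in> V" using orthoproj_in V(1) by (simp add: subspace_scale)
  show "inner (c *\<^sub>R x - c *\<^sub>R orthoproj V x) w = 0" if "w \<in> V" for w
    using orthoproj_orthogonal[OF that, of x] by (simp flip: scaleR_diff_right)
qed

lemma orthoproj_inner_commute: "inner (orthoproj V x) y = inner x (orthoproj V y)"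
proof -
  have "inner (orthoproj V x) y = inner (orthoproj V x) (orthoproj V y)"
    using orthoproj_orthogonal[OF orthoproj_in, of y x] by (simp add: inner_diff inner_commute)
  also have "\<dots> = inner x (orthoproj V y)"
    using orthoproj_orthogonal[OF orthoproj_in, of x y] by (simp add: inner_diff inner_commute)
  finally show ?thesis .
qed

lemma norm_orthoproj_le: "norm (orthoproj V x) \<le> norm x"
proof -
  have "norm (orthoproj V x) ^ 2 = inner (orthoproj V x) x"
    using orthoproj_orthogonal[OF orthoproj_in, of x x] by (simp add: power2_norm_eq_inner inner_diff inner_commute)
  also have "\<dots> \<le> norm (orthoproj V x) * norm x" by (rule norm_cauchy_schwarz)
  finally have "norm (orthoproj V x) * norm (orthoproj V x) \<le> norm (orthoproj V x) * norm x"
    by (simp add: power2_eq_square)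
  then show ?thesis
    by (cases "orthoproj V x = 0") simp_all
qed

lemma bounded_linear_orthoproj: "bounded_linear (orthoproj V)"
  by (rule bounded_linear_intro[of _ 1]) (simp_all add: orthoproj_add orthoproj_scaleR norm_orthoproj_le)

end

lemma riesz_representation:
  fixes f :: "'a::{real_inner,complete_space} \<Rightarrow> real"
  assumes "bounded_linear f"
  shows "\<exists>z. \<forall>x. f x = inner x z"
proof (cases "\<forall>x. f x = 0")
  case False
  then obtain u where u: "f u \<noteq> 0" by auto
  interpret f: bounded_linear f by fact
  define V where "V = {x. f x = 0}"
  have V: "subspace V" "closed V"
    unfolding V_def using f.linear_axioms
    by (auto intro!: linear_subspace_kernel closed_Collect_eq continuous_intros f.continuous_on)
  define w where "w = u - orthoproj V u"
  have fw: "f w = f u"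
    using orthoproj_in[OF V, of u] by (simp add: w_def f.diff V_def)
  have w_orth: "inner w v = 0" if "v \<in> V" for v
    using orthoproj_orthogonal[OF V that] by (simp add: w_def inner_commute)
  have "inner w w \<noteq> 0" using fw u f.zero by auto
  have "f x = inner x ((f w / inner w w) *\<^sub>R w)" for x
  proof -
    have "x - (f x / f w) *\<^sub>R w \<in> V" using u fw by (simp add: V_def f.diff f.scale)
    then have "inner w (x - (f x / f w) *\<^sub>R w) = 0" by (rule w_orth)
    then show ?thesis using \<open>inner w w \<noteq> 0\<close> u fw by (simp add: inner_diff_right inner_commute field_simps)
  qed
  then show ?thesis by blast
qed (auto intro: exI[of _ 0])

lemma adjoint_works_hilbert:
  fixes T :: "'a::{real_inner,complete_space} \<Rightarrow> 'a"
  assumes "bounded_linear T"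
  shows "inner (T x) y = inner x (adjoint T y)"
proof -
  have "\<exists>z. \<forall>x. inner (T x) y = inner x z" for y
    by (rule riesz_representation) (use assms bounded_linear_inner_left bounded_linear_compose in blast)
  then obtain g where "\<And>x y. inner (T x) y = inner x (g y)" by metis
  moreover from this have "adjoint T = g" by (intro adjoint_unique) auto
  ultimately show ?thesis by simp
qed

lemma bounded_linear_adjoint_hilbert:
  fixes T :: "'a::{real_inner,complete_space} \<Rightarrow> 'a"
  assumes "bounded_linear T"
  shows "bounded_linear (adjoint T)"
proof -
  interpret T: bounded_linear T by fact
  obtain K where K: "\<And>x. norm (T x) \<le> norm x * K" "K > 0" using T.pos_bounded by blast
  note adj = adjoint_works_hilbert[OF assms]
  show ?thesis
  proof (rule bounded_linear_intro[of _ K])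
    show "adjoint T (a + b) = adjoint T a + adjoint T b" for a b
      by (rule vector_eq_ldot[THEN iffD1]) (simp add: inner_add_right flip: adj)
    show "adjoint T (c *\<^sub>R a) = c *\<^sub>R adjoint T a" for c a
      by (rule vector_eq_ldot[THEN iffD1]) (simp flip: adj)
    show "norm (adjoint T y) \<le> norm y * K" for y
    proof -
      have "norm (adjoint T y) ^ 2 = inner (T (adjoint T y)) y"
        by (simp add: adj power2_norm_eq_inner)
      also have "\<dots> \<le> norm (adjoint T y) * K * norm y"
        using norm_cauchy_schwarz[of "T (adjoint T y)" y] K(1)[of "adjoint T y"]
        by (meson mult_right_mono norm_ge_zero order_trans)
      finally show ?thesis
        by (cases "adjoint T y = 0") (use K(2) in \<open>simp_all add: power2_eq_square mult.commute\<close>)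
    qed
  qed
qed

section \<open>Adjoints, projections and positive operators\<close>

context
  fixes T S :: "'a::{real_inner,complete_space} \<Rightarrow>\<^sub>L 'a"
begin

lemma blinfun_apply_adj: "blinfun_apply (adj T) = adjoint (blinfun_apply T)"
  unfolding adj_def
  by (rule bounded_linear_Blinfun_apply[OF bounded_linear_adjoint_hilbert[OF blinfun.bounded_linear_right]])

lemma inner_adj_right: "inner (T x) y = inner x (adj T y)"
  unfolding blinfun_apply_adj by (rule adjoint_works_hilbert[OF blinfun.bounded_linear_right])

lemma inner_adj_left: "inner (adj T x) y = inner x (T y)"
  by (metis inner_adj_right inner_commute)

lemma adj_eqI:
  assumes "\<And>x y. inner (T x) y = inner x (S y)"
  shows "adj T = S"
proof -
  have "adjoint (blinfun_apply T) = blinfun_apply S"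
    by (rule adjoint_unique) (simp add: assms)
  then show ?thesis by (intro blinfun_eqI) (simp add: blinfun_apply_adj)
qed

end

lemma adj_adj [simp]: "adj (adj T) = T"
  by (rule adj_eqI) (rule inner_adj_left)

lemma adj_compose: "adj (A o\<^sub>L B) = adj B o\<^sub>L adj A"
  by (rule adj_eqI) (simp add: inner_adj_right)

lemma adj_add: "adj (A + B) = adj A + adj B"
  by (rule adj_eqI) (simp add: inner_adj_right blinfun.add_left inner_add)

lemma adj_diff: "adj (A - B) = adj A - adj B"
  by (rule adj_eqI) (simp add: inner_adj_right blinfun.diff_left inner_diff)

lemma adj_id [simp]: "adj id_blinfun = id_blinfun"
  by (rule adj_eqI) simp

lemma adj_zero [simp]: "adj 0 = 0"
  by (rule adj_eqI) simp

lemma blinfun_compose_assoc: "(A o\<^sub>L B) o\<^sub>L C = A o\<^sub>L (B o\<^sub>L C)"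
  by (rule blinfun_eqI) simp

lemma blinfun_compose_id [simp]: "A o\<^sub>L id_blinfun = A" "id_blinfun o\<^sub>L A = A"
  by (auto intro: blinfun_eqI)

lemma blinfun_compose_uminus:
  "(- A) o\<^sub>L B = - (A o\<^sub>L B)" "A o\<^sub>L (- B) = - (A o\<^sub>L B)"
  by (auto intro!: blinfun_eqI simp: blinfun.minus_left blinfun.minus_right)

lemma is_proj_apply_idem: "is_proj P \<Longrightarrow> P (P x) = P x"
  unfolding is_proj_def by (metis blinfun_apply_blinfun_compose)

lemma is_proj_inner_commute: "is_proj P \<Longrightarrow> inner (P x) y = inner x (P y)"
  unfolding is_proj_def by (metis inner_adj_right)

lemma is_proj_inner_self: "is_proj P \<Longrightarrow> inner (P x) x = norm (P x) ^ 2"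
  by (metis is_proj_apply_idem is_proj_inner_commute power2_norm_eq_inner)

lemma is_proj_id: "is_proj id_blinfun"
  unfolding is_proj_def by simp

lemma is_proj_compl: "is_proj P \<Longrightarrow> is_proj (id_blinfun - P)"
  unfolding is_proj_def
  by (auto intro!: blinfun_eqI simp: adj_diff blinfun.diff_left blinfun.diff_right)
     (metis blinfun_apply_blinfun_compose)

lemma norm_is_proj_le: "is_proj P \<Longrightarrow> norm (P x) \<le> norm x"
  by (metis is_proj_inner_self norm_cauchy_schwarz power2_eq_square mult_le_cancel_left
      norm_ge_zero not_le order_antisym)

lemma pos_op_inner_nonneg: "pos_op A \<Longrightarrow> 0 \<le> inner (A x) x"
  unfolding pos_op_def by auto

lemma pos_op_adj: "pos_op A \<Longrightarrow> adj A = A"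
  unfolding pos_op_def by simp

lemma pos_op_inner_commute: "pos_op A \<Longrightarrow> inner (A x) y = inner x (A y)"
  unfolding pos_op_def by (metis inner_adj_right)

lemma op_leI:
  assumes "adj A = A" "adj B = B" "\<And>x. inner (A x) x \<le> inner (B x) x"
  shows "op_le A B"
  unfolding op_le_def pos_op_def using assms
  by (auto simp: adj_diff blinfun.diff_left inner_diff_left)

lemma op_leD: "op_le A B \<Longrightarrow> inner (A x) x \<le> inner (B x) x"
  unfolding op_le_def pos_op_def by (auto simp: blinfun.diff_left inner_diff_left)

definition proj_onto :: "'a::{real_inner,complete_space} set \<Rightarrow> 'a \<Rightarrow>\<^sub>L 'a" where
  "proj_onto V = Blinfun (orthoproj V)"

context
  fixes V :: "'a::{real_inner,complete_space} set"
  assumes V: "subspace V" "closed V"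
begin

lemma blinfun_apply_proj_onto: "blinfun_apply (proj_onto V) = orthoproj V"
  unfolding proj_onto_def by (rule bounded_linear_Blinfun_apply[OF bounded_linear_orthoproj[OF V]])

lemma is_proj_proj_onto: "is_proj (proj_onto V)"
  unfolding is_proj_def
proof
  show "proj_onto V o\<^sub>L proj_onto V = proj_onto V"
    by (rule blinfun_eqI) (simp add: blinfun_apply_proj_onto orthoproj_id[OF V] orthoproj_in[OF V])
  show "adj (proj_onto V) = proj_onto V"
    by (rule adj_eqI) (simp add: blinfun_apply_proj_onto orthoproj_inner_commute[OF V])
qed

lemma proj_onto_commute:
  fixes T :: "'a \<Rightarrow>\<^sub>L 'a"
  assumes TV: "\<And>v. v \<in> V \<Longrightarrow> T v \<in> V" and adj_TV: "\<And>v. v \<in> V \<Longrightarrow> adj T v \<in> V"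
  shows "proj_onto V o\<^sub>L T = T o\<^sub>L proj_onto V"
proof (rule blinfun_eqI)
  fix x
  let ?P = "orthoproj V"
  have "?P (T (x - ?P x)) = 0"
  proof (rule orthoproj_eq_0[OF V])
    show "inner (T (x - ?P x)) w = 0" if "w \<in> V" for w
      using orthoproj_orthogonal[OF V adj_TV[OF that]] by (simp add: inner_adj_right)
  qed
  moreover have "?P (T (?P x)) = T (?P x)"
    using TV orthoproj_in[OF V] orthoproj_id[OF V] by simp
  moreover have "T x = T (?P x) + T (x - ?P x)"
    by (simp add: blinfun.diff_right)
  then have "?P (T x) = ?P (T (?P x)) + ?P (T (x - ?P x))"
    using orthoproj_add[OF V] by simp
  ultimately have "?P (T x) = T (?P x)"
    by simp
  then show "(proj_onto V o\<^sub>L T) x = (T o\<^sub>L proj_onto V) x"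
    by (simp add: blinfun_apply_proj_onto)
qed

end

definition ker_proj :: "('a::{real_inner,complete_space} \<Rightarrow>\<^sub>L 'a) \<Rightarrow> 'a \<Rightarrow>\<^sub>L 'a" where
  "ker_proj X = proj_onto {x. X x = 0}"

context
  fixes X :: "'a::{real_inner,complete_space} \<Rightarrow>\<^sub>L 'a"
begin

lemma kernel_closed_subspace: "subspace {x. X x = 0}" "closed {x. X x = 0}"
  by (auto intro!: linear_subspace_kernel closed_Collect_eq continuous_intros bounded_linear.linear[OF blinfun.bounded_linear_right])

lemma is_proj_ker_proj: "is_proj (ker_proj X)"
  unfolding ker_proj_def by (rule is_proj_proj_onto[OF kernel_closed_subspace])

lemma ker_proj_in_kernel: "X (ker_proj X x) = 0"
  using orthoproj_in[OF kernel_closed_subspace]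
  by (simp add: ker_proj_def blinfun_apply_proj_onto[OF kernel_closed_subspace])

lemma ker_proj_orthogonal: "X y = 0 \<Longrightarrow> inner (x - ker_proj X x) y = 0"
  using orthoproj_orthogonal[OF kernel_closed_subspace]
  by (simp add: ker_proj_def blinfun_apply_proj_onto[OF kernel_closed_subspace])

lemma ker_proj_commute:
  assumes "X o\<^sub>L T = T o\<^sub>L X" "X o\<^sub>L adj T = adj T o\<^sub>L X"
  shows "ker_proj X o\<^sub>L T = T o\<^sub>L ker_proj X"
  unfolding ker_proj_def
proof (rule proj_onto_commute[OF kernel_closed_subspace])
  have "X (T v) = T (X v)" "X (adj T v) = adj T (X v)" for v
    using assms by (metis blinfun_apply_blinfun_compose)+
  then show "T v \<in> {x. X x = 0}" "adj T v \<in> {x. X x = 0}" if "v \<in> {x. X x = 0}" for v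
    using that by simp_all
qed

end

lemma subspace_closure:
  fixes S :: "'a::real_normed_vector set"
  assumes "subspace S"
  shows "subspace (closure S)"
  unfolding subspace_def
proof (intro conjI allI ballI)
  show "0 \<in> closure S"
    using subspace_0[OF assms] closure_subset by blast
next
  fix a b assume "a \<in> closure S" "b \<in> closure S"
  then obtain f g where "\<forall>n. f n \<in> S" "f \<longlonglongrightarrow> a" "\<forall>n. g n \<in> S" "g \<longlonglongrightarrow> b"
    unfolding closure_sequential by blast
  then show "a + b \<in> closure S"
    unfolding closure_sequential using assms
    by (intro exI[of _ "\<lambda>n. f n + g n"]) (simp add: subspace_add tendsto_add)
next
  fix c a assume "a \<in> closure S"
  then obtain f where "\<forall>n. f n \<in> S" "f \<longlonglongrightarrow> a"
    unfolding closure_sequential by blast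
  then show "c *\<^sub>R a \<in> closure S"
    unfolding closure_sequential using assms
    by (intro exI[of _ "\<lambda>n. c *\<^sub>R f n"]) (simp add: subspace_scale tendsto_scaleR)
qed

lemma orthogonal_kernel_in_closure_range:
  fixes X :: "'a::{real_inner,complete_space} \<Rightarrow>\<^sub>L 'a"
  assumes X: "adj X = X" and u: "\<And>y. X y = 0 \<Longrightarrow> inner u y = 0"
  shows "u \<in> closure (range X)"
proof -
  let ?W = "closure (range X)"
  have W: "subspace ?W" "closed ?W"
    by (simp_all add: subspace_closure linear_subspace_image bounded_linear.linear[OF blinfun.bounded_linear_right])
  define r where "r = u - orthoproj ?W u"
  have "inner r (X z) = 0" for z
    unfolding r_def by (rule orthoproj_orthogonal[OF W]) (simp add: closure_subset[THEN subsetD])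
  then have "inner (X r) (X r) = 0"
    by (simp add: inner_adj_right X)
  then have "inner u r = 0" using u by simp
  moreover have "inner (orthoproj ?W u) r = 0"
    using orthoproj_orthogonal[OF W orthoproj_in[OF W]] by (simp add: r_def inner_commute)
  ultimately have "inner r r = 0"
    by (simp add: r_def inner_diff_left)
  then have "r = 0" by simp
  then show ?thesis using orthoproj_in[OF W, of u] by (simp add: r_def)
qed

lemma coercive_invertible:
  fixes Y :: "'a::{real_inner,complete_space} \<Rightarrow>\<^sub>L 'a"
  assumes e: "e > 0" and coercive: "\<And>z. e * norm z ^ 2 \<le> inner (Y z) z"
  shows "\<exists>R. R o\<^sub>L Y = id_blinfun \<and> Y o\<^sub>L R = id_blinfun"
proof -
  have below: "e * norm z \<le> norm (Y z)" for z
  proof -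
    have "e * norm z * norm z \<le> norm (Y z) * norm z"
      using coercive[of z] norm_cauchy_schwarz[of "Y z" z] by (simp add: power2_eq_square)
    then show ?thesis by (cases "z = 0") simp_all
  qed
  have inj: "inj (blinfun_apply Y)"
  proof (rule injI)
    fix a b assume "Y a = Y b"
    then show "a = b" using below[of "a - b"] e by (simp add: blinfun.diff_right mult_le_0_iff)
  qed
  let ?W = "range (blinfun_apply Y)"
  have W: "subspace ?W" "closed ?W"
    using complete_isometric_image[OF e subspace_UNIV blinfun.bounded_linear_right _ complete_UNIV, of Y]
    by (simp_all add: below linear_subspace_image bounded_linear.linear[OF blinfun.bounded_linear_right] complete_imp_closed)
  have "z \<in> ?W" for z
  proof -
    define r where "r = z - orthoproj ?W z"
    have "inner r (Y r) = 0" unfolding r_def by (rule orthoproj_orthogonal[OF W]) simp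
    then have "r = 0" using coercive[of r] e by (simp add: inner_commute mult_le_0_iff)
    then show ?thesis using orthoproj_in[OF W, of z] by (simp add: r_def)
  qed
  then have surj: "surj (blinfun_apply Y)" by auto
  define g where "g = inv (blinfun_apply Y)"
  have gY: "g (Y x) = x" and Yg: "Y (g x) = x" for x
    using inj surj by (simp_all add: g_def surj_f_inv_f)
  have "bounded_linear g"
  proof (rule bounded_linear_intro[of _ "1 / e"])
    show "g (a + b) = g a + g b" for a b
      using gY[of "g a + g b"] by (simp add: blinfun.add_right Yg)
    show "g (c *\<^sub>R a) = c *\<^sub>R g a" for c a
      using gY[of "c *\<^sub>R g a"] by (simp add: blinfun.scaleR_right Yg)
    show "norm (g a) \<le> norm a * (1 / e)" for a
      using below[of "g a"] e by (simp add: Yg field_simps)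
  qed
  then have "blinfun_apply (Blinfun g) = g"
    by (rule bounded_linear_Blinfun_apply)
  then have "Blinfun g o\<^sub>L Y = id_blinfun" "Y o\<^sub>L Blinfun g = id_blinfun"
    by (auto intro!: blinfun_eqI simp: gY Yg)
  then show ?thesis by blast
qed

lemma inverse_commute:
  assumes "R o\<^sub>L Y = id_blinfun" "Y o\<^sub>L R = id_blinfun" "Y o\<^sub>L S = S o\<^sub>L Y"
  shows "R o\<^sub>L S = S o\<^sub>L R"
proof -
  have "R o\<^sub>L S = R o\<^sub>L S o\<^sub>L (Y o\<^sub>L R)"
    using assms(2) by simp
  also have "\<dots> = R o\<^sub>L (S o\<^sub>L Y) o\<^sub>L R"
    by (simp only: blinfun_compose_assoc)
  also have "\<dots> = (R o\<^sub>L Y) o\<^sub>L S o\<^sub>L R"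
    using assms(3) by (simp only: blinfun_compose_assoc)
  also have "\<dots> = S o\<^sub>L R"
    using assms(1) by simp
  finally show ?thesis .
qed

section \<open>Von Neumann algebras with a faithful normal tracial state\<close>

lemma cscale_of_real: "cscale J (complex_of_real r) A = r *\<^sub>R A"
  unfolding cscale_def by simp

locale tracial_vna =
  fixes J :: "'h::{real_inner,complete_space} \<Rightarrow>\<^sub>L 'h"
    and M :: "('h \<Rightarrow>\<^sub>L 'h) set"
    and \<tau> :: "('h \<Rightarrow>\<^sub>L 'h) \<Rightarrow> complex"
  assumes complex_structure: "complex_structure J"
    and von_neumann_algebra: "von_neumann_algebra J M"
    and trace: "faithful_normal_tracial_state J M \<tau>"
begin

lemma mem_id: "id_blinfun \<in> M"
  and mem_add: "A \<in> M \<Longrightarrow> B \<in> M \<Longrightarrow> A + B \<in> M"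
  and mem_compose: "A \<in> M \<Longrightarrow> B \<in> M \<Longrightarrow> A o\<^sub>L B \<in> M"
  and mem_adj: "A \<in> M \<Longrightarrow> adj A \<in> M"
  and mem_cscale: "A \<in> M \<Longrightarrow> cscale J c A \<in> M"
  and double_commutant: "commutant J (commutant J M) = M"
  using von_neumann_algebra unfolding von_neumann_algebra_def by simp_all

lemma mem_commute_J: "A \<in> M \<Longrightarrow> A o\<^sub>L J = J o\<^sub>L A"
  using von_neumann_algebra unfolding von_neumann_algebra_def cplx_ops_def by auto

lemma mem_scaleR: "A \<in> M \<Longrightarrow> r *\<^sub>R A \<in> M"
  using mem_cscale[of A "complex_of_real r"] by (simp add: cscale_of_real)

lemma mem_zero: "0 \<in> M"
  using mem_scaleR[OF mem_id, of 0] by simp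

lemma mem_diff: "A \<in> M \<Longrightarrow> B \<in> M \<Longrightarrow> A - B \<in> M"
  using mem_add[OF _ mem_scaleR[of B "-1"], of A] by simp

lemma mem_sum: "finite I \<Longrightarrow> \<forall>i\<in>I. A i \<in> M \<Longrightarrow> (\<Sum>i\<in>I. A i) \<in> M"
  by (induction I rule: finite_induct) (simp_all add: mem_add mem_zero)

lemma trace_add: "A \<in> M \<Longrightarrow> B \<in> M \<Longrightarrow> \<tau> (A + B) = \<tau> A + \<tau> B"
  using trace unfolding faithful_normal_tracial_state_def by (elim conjE) blast

lemma trace_cscale: "A \<in> M \<Longrightarrow> \<tau> (cscale J c A) = c * \<tau> A"
  using trace unfolding faithful_normal_tracial_state_def by (elim conjE) blast

lemma trace_nonneg: "A \<in> M \<Longrightarrow> pos_op A \<Longrightarrow> 0 \<le> Re (\<tau> A)"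
  using trace unfolding faithful_normal_tracial_state_def by (elim conjE) blast

lemma trace_commute: "A \<in> M \<Longrightarrow> B \<in> M \<Longrightarrow> \<tau> (A o\<^sub>L B) = \<tau> (B o\<^sub>L A)"
  using trace unfolding faithful_normal_tracial_state_def by (elim conjE) blast

lemma trace_normal:
  assumes "S \<noteq> {}" "S \<subseteq> M" "\<forall>B\<in>S. pos_op B"
    and "\<forall>B\<in>S. \<forall>C\<in>S. \<exists>D\<in>S. op_le B D \<and> op_le C D"
    and "A \<in> M" "adj A = A" "\<forall>B\<in>S. op_le B A"
    and "\<forall>A'\<in>M. adj A' = A' \<and> (\<forall>B\<in>S. op_le B A') \<longrightarrow> op_le A A'"
  shows "Re (\<tau> A) = (SUP B\<in>S. Re (\<tau> B))"
proof -
  have "\<forall>S A. S \<noteq> {} \<and> S \<subseteq> M \<and> (\<forall>B\<in>S. pos_op B) \<and>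
            (\<forall>B\<in>S. \<forall>C\<in>S. \<exists>D\<in>S. op_le B D \<and> op_le C D) \<and>
            A \<in> M \<and> adj A = A \<and> (\<forall>B\<in>S. op_le B A) \<and>
            (\<forall>A'\<in>M. adj A' = A' \<and> (\<forall>B\<in>S. op_le B A') \<longrightarrow> op_le A A')
        \<longrightarrow> Re (\<tau> A) = (SUP B\<in>S. Re (\<tau> B))"
    using trace unfolding faithful_normal_tracial_state_def by (elim conjE)
  with assms show ?thesis by blast
qed

lemma trace_diff: "A \<in> M \<Longrightarrow> B \<in> M \<Longrightarrow> \<tau> (A - B) = \<tau> A - \<tau> B"
  using trace_add[OF _ mem_scaleR[of B "-1"], of A] trace_cscale[of B "-1"]
  by (simp add: cscale_of_real[of J "-1", simplified])

lemma trace_zero: "\<tau> 0 = 0"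
  using trace_add[OF mem_zero mem_zero] by simp

lemma trace_sum: "finite I \<Longrightarrow> \<forall>i\<in>I. A i \<in> M \<Longrightarrow> \<tau> (\<Sum>i\<in>I. A i) = (\<Sum>i\<in>I. \<tau> (A i))"
  by (induction I rule: finite_induct) (simp_all add: trace_zero trace_add mem_sum)

lemma trace_mono: "A \<in> M \<Longrightarrow> B \<in> M \<Longrightarrow> op_le A B \<Longrightarrow> Re (\<tau> A) \<le> Re (\<tau> B)"
  using trace_nonneg[OF mem_diff[of B A]] trace_diff[of B A] unfolding op_le_def by simp

lemma adj_J: "adj J = - J"
proof (rule adj_eqI)
  have JJ: "J (J y) = - y" for y
    using complex_structure unfolding complex_structure_def
    by (metis blinfun_apply_blinfun_compose blinfun_apply_id_blinfun blinfun.minus_left)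
  fix x y
  have "inner (J x) y = - inner (J x) (J (J y))" using JJ by simp
  also have "\<dots> = - inner x (J y)"
    using complex_structure unfolding complex_structure_def by simp
  finally show "inner (J x) y = inner x ((- J) y)" by (simp add: blinfun.minus_left)
qed

lemma adj_mem_commutant:
  assumes T: "T \<in> commutant J M"
  shows "adj T \<in> commutant J M"
proof -
  have TJ: "T o\<^sub>L J = J o\<^sub>L T" and TA: "\<And>A. A \<in> M \<Longrightarrow> T o\<^sub>L A = A o\<^sub>L T"
    using T unfolding commutant_def cplx_ops_def by auto
  have "J o\<^sub>L adj T = adj T o\<^sub>L J"
    using arg_cong[OF TJ, of adj] by (simp add: adj_compose adj_J blinfun_compose_uminus)
  moreover have "adj T o\<^sub>L A = A o\<^sub>L adj T" if "A \<in> M" for A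
    using arg_cong[OF TA[OF mem_adj[OF that]], of adj] by (simp add: adj_compose)
  ultimately show ?thesis unfolding commutant_def cplx_ops_def by (auto simp: eq_commute)
qed

lemma mem_if_commutes:
  assumes "X o\<^sub>L J = J o\<^sub>L X" "\<And>T. T \<in> commutant J M \<Longrightarrow> X o\<^sub>L T = T o\<^sub>L X"
  shows "X \<in> M"
proof -
  have "X \<in> commutant J (commutant J M)"
    using assms unfolding commutant_def[of J "commutant J M"] cplx_ops_def by auto
  then show ?thesis using double_commutant by simp
qed

lemma commutant_commute: "T \<in> commutant J M \<Longrightarrow> A \<in> M \<Longrightarrow> A o\<^sub>L T = T o\<^sub>L A"
  unfolding commutant_def by auto

lemma ker_proj_mem:
  assumes X: "X \<in> M"
  shows "ker_proj X \<in> M"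
proof (rule mem_if_commutes)
  show "ker_proj X o\<^sub>L J = J o\<^sub>L ker_proj X"
    using mem_commute_J[OF X]
    by (intro ker_proj_commute) (simp_all add: adj_J blinfun_compose_uminus)
  show "ker_proj X o\<^sub>L T = T o\<^sub>L ker_proj X" if "T \<in> commutant J M" for T
    using commutant_commute[OF that X] commutant_commute[OF adj_mem_commutant[OF that] X]
    by (intro ker_proj_commute) auto
qed

text \<open>The inverse of X + e in M; it is specified only for positive X in M and e > 0.\<close>

definition resolvent :: "('h \<Rightarrow>\<^sub>L 'h) \<Rightarrow> real \<Rightarrow> 'h \<Rightarrow>\<^sub>L 'h" where
  "resolvent X e = (SOME R. R \<in> M \<and> R o\<^sub>L (X + e *\<^sub>R id_blinfun) = id_blinfun \<and>
                            (X + e *\<^sub>R id_blinfun) o\<^sub>L R = id_blinfun)"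

context
  fixes X :: "'h \<Rightarrow>\<^sub>L 'h" and e :: real
  assumes X: "X \<in> M" "pos_op X" and e: "e > 0"
begin

lemma resolvent_inverse:
  "resolvent X e \<in> M"
  "resolvent X e o\<^sub>L (X + e *\<^sub>R id_blinfun) = id_blinfun"
  "(X + e *\<^sub>R id_blinfun) o\<^sub>L resolvent X e = id_blinfun"
proof -
  let ?Y = "X + e *\<^sub>R id_blinfun"
  have "e * norm z ^ 2 \<le> inner (?Y z) z" for z
    using pos_op_inner_nonneg[OF X(2), of z]
    by (simp add: blinfun.add_left blinfun.scaleR_left inner_add_left power2_norm_eq_inner)
  from coercive_invertible[OF e this]
  obtain R where R: "R o\<^sub>L ?Y = id_blinfun" "?Y o\<^sub>L R = id_blinfun"
    by blast
  have Y: "?Y \<in> M" using X by (simp add: mem_add mem_scaleR mem_id)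
  have "R \<in> M"
  proof (rule mem_if_commutes)
    show "R o\<^sub>L J = J o\<^sub>L R" by (rule inverse_commute[OF R mem_commute_J[OF Y]])
    show "R o\<^sub>L T = T o\<^sub>L R" if "T \<in> commutant J M" for T
      by (rule inverse_commute[OF R commutant_commute[OF that Y]])
  qed
  with R have "\<exists>R. R \<in> M \<and> R o\<^sub>L ?Y = id_blinfun \<and> ?Y o\<^sub>L R = id_blinfun" by blast
  then have "resolvent X e \<in> M \<and> resolvent X e o\<^sub>L ?Y = id_blinfun \<and> ?Y o\<^sub>L resolvent X e = id_blinfun"
    unfolding resolvent_def by (rule someI_ex)
  then show "resolvent X e \<in> M" "resolvent X e o\<^sub>L ?Y = id_blinfun" "?Y o\<^sub>L resolvent X e = id_blinfun"
    by auto
qed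

lemmas resolvent_mem = resolvent_inverse(1)

lemma resolvent_left: "resolvent X e (X y + e *\<^sub>R y) = y"
  using arg_cong[OF resolvent_inverse(2), of "\<lambda>T. T y"] by (simp add: blinfun.add_left blinfun.scaleR_left)

lemma resolvent_right: "X (resolvent X e y) + e *\<^sub>R resolvent X e y = y"
  using arg_cong[OF resolvent_inverse(3), of "\<lambda>T. T y"] by (simp add: blinfun.add_left blinfun.scaleR_left)

lemma resolvent_commute: "resolvent X e (X y) = X (resolvent X e y)"
proof -
  have "(X + e *\<^sub>R id_blinfun) o\<^sub>L X = X o\<^sub>L (X + e *\<^sub>R id_blinfun)"
    by (rule blinfun_eqI) (simp add: blinfun.add_left blinfun.scaleR_left blinfun.scaleR_right blinfun.add_right)
  from inverse_commute[OF resolvent_inverse(2,3) this] show ?thesis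
    by (metis blinfun_apply_blinfun_compose)
qed

lemma adj_resolvent: "adj (resolvent X e) = resolvent X e"
proof (rule adj_eqI)
  fix a b
  let ?R = "resolvent X e"
  have "inner (?R a) b = inner (?R a) (X (?R b) + e *\<^sub>R ?R b)" using resolvent_right[of b] by simp
  also have "\<dots> = inner (X (?R a) + e *\<^sub>R ?R a) (?R b)"
    using pos_op_inner_commute[OF X(2), of "?R a" "?R b"] by (simp add: inner_add)
  finally show "inner (?R a) b = inner a (?R b)" using resolvent_right[of a] by simp
qed

lemma inner_resolvent_eq:
  "inner (resolvent X e y) y = inner (X (resolvent X e y)) (resolvent X e y) + e * norm (resolvent X e y) ^ 2"
  using arg_cong[OF resolvent_right[of y], of "inner (resolvent X e y)"]
  by (simp add: inner_add_right inner_commute power2_norm_eq_inner)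

lemma inner_resolvent_nonneg: "0 \<le> inner (resolvent X e y) y"
  using inner_resolvent_eq[of y] pos_op_inner_nonneg[OF X(2), of "resolvent X e y"] e by simp

text \<open>The quadratic form of the resolvent is the maximum of
  2 inner y w - inner (X w) w - e norm w ^ 2, attained at w = resolvent X e y.\<close>

lemma inner_resolvent_ge: "2 * inner y w - inner (X w) w - e * norm w ^ 2 \<le> inner (resolvent X e y) y"
proof -
  define z where "z = resolvent X e y"
  have y: "y = X z + e *\<^sub>R z" unfolding z_def using resolvent_right[of y] by simp
  have "0 \<le> inner (X (w - z)) (w - z) + e * inner (w - z) (w - z)"
    using pos_op_inner_nonneg[OF X(2), of "w - z"] e by simp
  also have "inner (X (w - z)) (w - z) = inner (X w) w - 2 * inner (X z) w + inner (X z) z"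
    using pos_op_inner_commute[OF X(2), of w z]
    by (simp add: blinfun.diff_right inner_diff_left inner_diff_right inner_commute)
  also have "inner (w - z) (w - z) = inner w w - 2 * inner z w + inner z z"
    by (simp add: inner_diff_left inner_diff_right inner_commute)
  finally have "0 \<le> inner (X w) w - 2 * inner (X z) w + inner (X z) z + e * (inner w w - 2 * inner z w + inner z z)" .
  moreover have "inner y w = inner (X z) w + e * inner z w"
    using y by (simp add: inner_add_left)
  moreover have "inner (resolvent X e y) y = inner (X z) z + e * inner z z"
    using inner_resolvent_eq[of y] by (simp add: z_def power2_norm_eq_inner)
  ultimately show ?thesis by (simp add: power2_norm_eq_inner algebra_simps)
qed

lemma inner_resolvent_max: "inner (resolvent X e y) y =
    2 * inner y (resolvent X e y) - inner (X (resolvent X e y)) (resolvent X e y) - e * norm (resolvent X e y) ^ 2"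
  using inner_resolvent_eq[of y] by (simp add: inner_commute)

lemma norm_resolvent_le: "e * norm (resolvent X e y) \<le> norm y"
proof -
  let ?z = "resolvent X e y"
  have "e * norm ?z ^ 2 \<le> inner ?z y"
    using inner_resolvent_eq[of y] pos_op_inner_nonneg[OF X(2), of ?z] by (simp add: inner_commute)
  also have "\<dots> \<le> norm ?z * norm y" by (rule norm_cauchy_schwarz)
  finally have "e * norm ?z * norm ?z \<le> norm y * norm ?z" by (simp add: power2_eq_square algebra_simps)
  then show ?thesis by (cases "?z = 0") (use e in auto)
qed

lemma resolvent_kernel: "X k = 0 \<Longrightarrow> e *\<^sub>R resolvent X e k = k"
  using resolvent_left[of k] by (simp add: blinfun.scaleR_right)

end

end

context tracial_vna
begin

context
  fixes X :: "'h \<Rightarrow>\<^sub>L 'h"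
  assumes X: "X \<in> M" "pos_op X"
begin

lemma scaled_inner_resolvent_decompose:
  assumes e: "e > 0"
  shows "e * inner (resolvent X e x) x =
    norm (ker_proj X x) ^ 2 + e * inner (resolvent X e (x - ker_proj X x)) (x - ker_proj X x)"
proof -
  define k where "k = ker_proj X x"
  define u where "u = x - k"
  let ?R = "resolvent X e"
  have Rk: "e *\<^sub>R ?R k = k"
    unfolding k_def by (rule resolvent_kernel[OF X e ker_proj_in_kernel])
  have uk: "inner u k = 0"
    unfolding u_def k_def by (rule ker_proj_orthogonal[OF ker_proj_in_kernel])
  have "inner (?R u) k = inner u (?R k)"
    by (metis adj_resolvent[OF X e] inner_adj_right)
  also have "\<dots> = 0"
    using arg_cong[OF Rk, of "inner u"] uk e by simp
  finally have Ruk: "inner (?R u) k = 0" .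
  have "e * inner (?R x) x = inner (e *\<^sub>R ?R (k + u)) (k + u)"
    by (simp add: u_def)
  also have "\<dots> = inner (e *\<^sub>R ?R k + e *\<^sub>R ?R u) (k + u)"
    by (simp add: blinfun.add_right scaleR_add_right)
  also have "\<dots> = inner k k + e * inner (?R u) u"
    using Rk uk Ruk by (simp add: inner_add inner_commute)
  finally show ?thesis by (simp add: k_def u_def power2_norm_eq_inner)
qed

lemma inner_compose_resolvent:
  assumes e: "e > 0"
  shows "inner ((X o\<^sub>L resolvent X e) x) x =
    inner ((id_blinfun - ker_proj X) x) x - e * inner (resolvent X e (x - ker_proj X x)) (x - ker_proj X x)"
proof -
  have "(X o\<^sub>L resolvent X e) x = x - e *\<^sub>R resolvent X e x"
    using resolvent_right[OF X e, of x] by (simp add: algebra_simps)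
  then show ?thesis
    using scaled_inner_resolvent_decompose[OF e, of x] is_proj_inner_self[OF is_proj_ker_proj, of X x]
    by (simp add: blinfun.diff_left inner_diff_left)
qed

lemma compose_resolvent_self_adjoint: "e > 0 \<Longrightarrow> adj (X o\<^sub>L resolvent X e) = X o\<^sub>L resolvent X e"
  by (auto intro!: blinfun_eqI simp: adj_compose adj_resolvent[OF X] pos_op_adj[OF X(2)] resolvent_commute[OF X])

lemma pos_op_compose_resolvent:
  assumes e: "e > 0"
  shows "pos_op (X o\<^sub>L resolvent X e)"
  unfolding pos_op_def
proof (intro conjI allI)
  show "adj (X o\<^sub>L resolvent X e) = X o\<^sub>L resolvent X e" by (rule compose_resolvent_self_adjoint[OF e])
  fix y
  define z where "z = resolvent X e y"
  have "inner ((X o\<^sub>L resolvent X e) y) y = inner (X z) (X z + e *\<^sub>R z)"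
    using resolvent_right[OF X e, of y] by (simp add: z_def)
  also have "\<dots> = inner (X z) (X z) + e * inner (X z) z"
    by (simp add: inner_add_right)
  finally show "0 \<le> inner ((X o\<^sub>L resolvent X e) y) y"
    using pos_op_inner_nonneg[OF X(2), of z] e by simp
qed

lemma scaled_inner_resolvent_mono:
  assumes e: "e > 0" and e1: "e \<le> e1"
  shows "e * inner (resolvent X e y) y \<le> e1 * inner (resolvent X e1 y) y"
proof -
  have "e1 > 0" using e e1 by simp
  define z where "z = resolvent X e y"
  define a where "a = inner (X z) z"
  define b where "b = norm z ^ 2"
  define t where "t = e / e1"
  have "a \<ge> 0" unfolding a_def by (rule pos_op_inner_nonneg[OF X(2)])
  have t: "e = e1 * t" "0 \<le> t" "t \<le> 1"
    using e e1 \<open>e1 > 0\<close> by (auto simp: t_def)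
  have Ry: "inner (resolvent X e y) y = a + e * b"
    unfolding a_def b_def z_def by (rule inner_resolvent_eq[OF X e])
  have "2 * inner y (t *\<^sub>R z) - inner (X (t *\<^sub>R z)) (t *\<^sub>R z) - e1 * norm (t *\<^sub>R z) ^ 2
        \<le> inner (resolvent X e1 y) y"
    by (rule inner_resolvent_ge[OF X \<open>e1 > 0\<close>])
  then have "2 * t * (a + e * b) - t * t * a - e1 * t * t * b \<le> inner (resolvent X e1 y) y"
    using Ry by (simp add: a_def b_def z_def blinfun.scaleR_right inner_commute power_mult_distrib
      power2_eq_square algebra_simps)
  then have "e1 * (2 * t * (a + e * b) - t * t * a - e1 * t * t * b) \<le> e1 * inner (resolvent X e1 y) y"
    using \<open>e1 > 0\<close> by simp
  moreover have "a * e1 * (t * t) \<le> a * e1 * t"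
    using \<open>a \<ge> 0\<close> \<open>e1 > 0\<close> t mult_left_mono[OF t(3) t(2)] by (intro mult_left_mono) simp_all
  then have "e * (a + e * b) \<le> e1 * (2 * t * (a + e * b) - t * t * a - e1 * t * t * b)"
    using t(1) by (simp add: algebra_simps)
  ultimately show ?thesis using Ry by simp
qed

lemma compose_resolvent_mono:
  assumes "e > 0" "e \<le> e1"
  shows "op_le (X o\<^sub>L resolvent X e1) (X o\<^sub>L resolvent X e)"
proof (rule op_leI)
  have "e1 > 0" using assms by simp
  then show "adj (X o\<^sub>L resolvent X e1) = X o\<^sub>L resolvent X e1"
    by (rule compose_resolvent_self_adjoint)
  show "adj (X o\<^sub>L resolvent X e) = X o\<^sub>L resolvent X e"
    by (rule compose_resolvent_self_adjoint[OF assms(1)])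
  have "(X o\<^sub>L resolvent X d) y = y - d *\<^sub>R resolvent X d y" if "d > 0" for d y
    using resolvent_right[OF X that, of y] by (simp add: algebra_simps)
  then show "inner ((X o\<^sub>L resolvent X e1) y) y \<le> inner ((X o\<^sub>L resolvent X e) y) y" for y
    using scaled_inner_resolvent_mono[OF assms, of y] assms \<open>e1 > 0\<close> by (simp add: inner_diff_left)
qed

lemma norm_scaled_resolvent_le:
  assumes e: "e > 0"
  shows "norm (e *\<^sub>R resolvent X e u) \<le> norm (u - X y) + 2 * e * norm y"
proof -
  let ?R = "resolvent X e"
  have "X (?R y) = y - e *\<^sub>R ?R y"
    using resolvent_right[OF X e, of y] by (simp add: eq_diff_eq)
  then have "e *\<^sub>R ?R (X y) = e *\<^sub>R y - e *\<^sub>R (e *\<^sub>R ?R y)"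
    using resolvent_commute[OF X e, of y] by (simp add: scaleR_diff_right)
  then have "norm (e *\<^sub>R ?R (X y)) \<le> e * norm y + e * (e * norm (?R y))"
    using norm_triangle_ineq4[of "e *\<^sub>R y" "e *\<^sub>R (e *\<^sub>R ?R y)"] e by simp
  also have "\<dots> \<le> 2 * e * norm y"
    using norm_resolvent_le[OF X e, of y] e by simp
  finally have "norm (e *\<^sub>R ?R (X y)) \<le> 2 * e * norm y" .
  moreover have "norm (e *\<^sub>R ?R (u - X y)) \<le> norm (u - X y)"
    using norm_resolvent_le[OF X e, of "u - X y"] e by simp
  moreover have "?R u = ?R (u - X y) + ?R (X y)"
    by (simp add: blinfun.diff_right)
  then have "norm (e *\<^sub>R ?R u) \<le> norm (e *\<^sub>R ?R (u - X y)) + norm (e *\<^sub>R ?R (X y))"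
    by (simp only: scaleR_add_right norm_triangle_ineq)
  ultimately show ?thesis
    by linarith
qed

lemma tendsto_scaled_resolvent:
  assumes u: "\<And>y. X y = 0 \<Longrightarrow> inner u y = 0"
  shows "((\<lambda>e. e *\<^sub>R resolvent X e u) \<longlongrightarrow> 0) (at_right 0)"
  unfolding tendsto_iff
proof (intro allI impI)
  fix \<eta> :: real assume "\<eta> > 0"
  have "u \<in> closure (range X)"
    by (rule orthogonal_kernel_in_closure_range[OF pos_op_adj[OF X(2)] u])
  then obtain y where y: "dist (X y) u < \<eta> / 2"
    using \<open>\<eta> > 0\<close> closure_approachable[of u "range X"] by (metis half_gt_zero rangeE)
  have "0 < norm y + 1" using norm_ge_zero[of y] by linarith
  have "dist (e *\<^sub>R resolvent X e u) 0 < \<eta>" if "e > 0" "e < \<eta> / (4 * (norm y + 1))" for e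
  proof -
    have "e * (4 * (norm y + 1)) < \<eta>"
      using that(2) \<open>0 < norm y + 1\<close> by (simp add: less_divide_eq)
    then have "2 * e * norm y < \<eta> / 2"
      using \<open>e > 0\<close> by (simp add: algebra_simps)
    then show ?thesis
      using norm_scaled_resolvent_le[OF that(1), of u y] y by (simp add: dist_norm norm_minus_commute)
  qed
  moreover have "\<eta> / (4 * (norm y + 1)) > 0"
    using \<open>\<eta> > 0\<close> \<open>0 < norm y + 1\<close> by simp
  ultimately show "\<forall>\<^sub>F e in at_right 0. dist (e *\<^sub>R resolvent X e u) 0 < \<eta>"
    unfolding eventually_at_right_field by blast
qed

lemma compose_resolvent_le_support:
  assumes e: "e > 0"
  shows "op_le (X o\<^sub>L resolvent X e) (id_blinfun - ker_proj X)"
proof (rule op_leI)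
  show "adj (X o\<^sub>L resolvent X e) = X o\<^sub>L resolvent X e" by (rule compose_resolvent_self_adjoint[OF e])
  show "adj (id_blinfun - ker_proj X) = id_blinfun - ker_proj X"
    using is_proj_ker_proj[of X] by (simp add: is_proj_def adj_diff)
  show "inner ((X o\<^sub>L resolvent X e) x) x \<le> inner ((id_blinfun - ker_proj X) x) x" for x
    using inner_compose_resolvent[OF e, of x] inner_resolvent_nonneg[OF X e, of "x - ker_proj X x"] e
    by simp
qed

text \<open>id_blinfun - ker_proj X, the support projection of X, is the least upper bound of the
  increasing family X (X + e)^-1, e > 0; this is where normality of the trace enters.\<close>

lemma support_le_upper_bound:
  assumes A: "adj A = A" and le: "\<And>e. e > 0 \<Longrightarrow> op_le (X o\<^sub>L resolvent X e) A"
  shows "op_le (id_blinfun - ker_proj X) A"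
proof (rule op_leI)
  show "adj (id_blinfun - ker_proj X) = id_blinfun - ker_proj X"
    using is_proj_ker_proj[of X] by (simp add: is_proj_def adj_diff)
  show "adj A = A" by (rule A)
  fix x
  define u where "u = x - ker_proj X x"
  have "((\<lambda>e. inner (e *\<^sub>R resolvent X e u) u) \<longlongrightarrow> inner 0 u) (at_right 0)"
    by (intro tendsto_intros tendsto_scaled_resolvent) (simp add: u_def ker_proj_orthogonal)
  then have "((\<lambda>e. inner ((id_blinfun - ker_proj X) x) x - e * inner (resolvent X e u) u)
      \<longlongrightarrow> inner ((id_blinfun - ker_proj X) x) x) (at_right 0)"
    using tendsto_diff[OF tendsto_const[of "inner ((id_blinfun - ker_proj X) x) x"]] by fastforce
  moreover have "\<forall>\<^sub>F e in at_right 0.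
      inner ((id_blinfun - ker_proj X) x) x - e * inner (resolvent X e u) u \<le> inner (A x) x"
  proof -
    have "inner ((id_blinfun - ker_proj X) x) x - e * inner (resolvent X e u) u \<le> inner (A x) x"
      if "e > 0" for e
      using op_leD[OF le[OF that], of x] inner_compose_resolvent[OF that, of x] by (simp add: u_def)
    then show ?thesis
      unfolding eventually_at_right_field by (intro exI[of _ 1]) auto
  qed
  ultimately show "inner ((id_blinfun - ker_proj X) x) x \<le> inner (A x) x"
    by (rule tendsto_upperbound) simp
qed

lemma trace_support_le:
  assumes c: "\<And>e. e > 0 \<Longrightarrow> Re (\<tau> (X o\<^sub>L resolvent X e)) \<le> c"
  shows "Re (\<tau> (id_blinfun - ker_proj X)) \<le> c"
proof -
  let ?f = "\<lambda>e. X o\<^sub>L resolvent X e"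
  define S where "S = ?f ` {0<..}"
  have "S \<noteq> {}" by (simp add: S_def)
  have "Re (\<tau> (id_blinfun - ker_proj X)) = (SUP B\<in>S. Re (\<tau> B))"
  proof (rule trace_normal)
    show "S \<noteq> {}" by fact
    show "S \<subseteq> M" using X by (auto simp: S_def intro: mem_compose resolvent_mem)
    show "\<forall>B\<in>S. pos_op B" by (auto simp: S_def intro: pos_op_compose_resolvent)
    show "\<forall>B\<in>S. \<forall>C\<in>S. \<exists>D\<in>S. op_le B D \<and> op_le C D"
    proof (intro ballI)
      fix B C assume "B \<in> S" "C \<in> S"
      then obtain e1 e2 where "B = ?f e1" "e1 > 0" "C = ?f e2" "e2 > 0" by (auto simp: S_def)
      then show "\<exists>D\<in>S. op_le B D \<and> op_le C D"
        by (intro bexI[of _ "?f (min e1 e2)"]) (auto simp: S_def compose_resolvent_mono)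
    qed
    show "id_blinfun - ker_proj X \<in> M" using X by (intro mem_diff mem_id ker_proj_mem)
    show "adj (id_blinfun - ker_proj X) = id_blinfun - ker_proj X"
      using is_proj_ker_proj[of X] by (simp add: is_proj_def adj_diff)
    show "\<forall>B\<in>S. op_le B (id_blinfun - ker_proj X)"
      by (auto simp: S_def intro: compose_resolvent_le_support)
    show "\<forall>A'\<in>M. adj A' = A' \<and> (\<forall>B\<in>S. op_le B A') \<longrightarrow> op_le (id_blinfun - ker_proj X) A'"
      by (auto simp: S_def intro: support_le_upper_bound)
  qed
  also have "\<dots> \<le> c"
    using \<open>S \<noteq> {}\<close> c by (auto simp: S_def intro: cSUP_least)
  finally show ?thesis .
qed

end

end

context tracial_vna
begin

text \<open>This is the operator inequality A (X + e)^-1 A* \<le> 1 for the column A = (A i) with A* A \<le> X,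
  written for a vector z = A* y.\<close>

lemma inner_resolvent_le_sum:
  fixes A :: "'i \<Rightarrow> 'h \<Rightarrow>\<^sub>L 'h"
  assumes X: "X \<in> M" "pos_op X" and e: "e > 0" and I: "finite I"
    and dominated: "\<And>w. (\<Sum>i\<in>I. norm (A i w) ^ 2) \<le> inner (X w) w"
    and z: "\<And>w. inner z w = (\<Sum>i\<in>I. inner (y i) (A i w))"
  shows "inner (resolvent X e z) z \<le> (\<Sum>i\<in>I. norm (y i) ^ 2)"
proof -
  define w where "w = resolvent X e z"
  have "inner (resolvent X e z) z = 2 * inner z w - inner (X w) w - e * norm w ^ 2"
    unfolding w_def by (rule inner_resolvent_max[OF X e])
  also have "\<dots> \<le> 2 * (\<Sum>i\<in>I. inner (y i) (A i w)) - (\<Sum>i\<in>I. norm (A i w) ^ 2)"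
  proof -
    have "0 \<le> e * norm w ^ 2" using e by simp
    then show ?thesis using dominated[of w] z[of w] by linarith
  qed
  also have "\<dots> = (\<Sum>i\<in>I. 2 * inner (y i) (A i w) - norm (A i w) ^ 2)"
    by (simp add: sum_subtractf sum_distrib_left)
  also have "\<dots> \<le> (\<Sum>i\<in>I. norm (y i) ^ 2)"
    by (intro sum_mono inner_twice_minus_norm_le)
  finally show ?thesis .
qed

lemma trace_compress_resolvent_le:
  assumes X: "X \<in> M" "pos_op X" and e: "e > 0" and C: "C \<in> M" and B: "B \<in> M" "adj B = B"
    and le: "\<And>x. inner (resolvent X e (adj C x)) (adj C x) \<le> inner (B x) x"
  shows "Re (\<tau> (adj C o\<^sub>L C o\<^sub>L resolvent X e)) \<le> Re (\<tau> B)"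
proof -
  let ?R = "resolvent X e"
  have R: "?R \<in> M" by (rule resolvent_mem[OF X e])
  have "\<tau> (adj C o\<^sub>L C o\<^sub>L ?R) = \<tau> (adj C o\<^sub>L (C o\<^sub>L ?R))"
    by (simp add: blinfun_compose_assoc)
  also have "\<dots> = \<tau> (C o\<^sub>L ?R o\<^sub>L adj C)"
    using C R by (intro trace_commute mem_adj mem_compose)
  finally have eq: "\<tau> (adj C o\<^sub>L C o\<^sub>L ?R) = \<tau> (C o\<^sub>L ?R o\<^sub>L adj C)" .
  have "op_le (C o\<^sub>L ?R o\<^sub>L adj C) B"
  proof (rule op_leI)
    show "adj (C o\<^sub>L ?R o\<^sub>L adj C) = C o\<^sub>L ?R o\<^sub>L adj C"
      by (simp add: adj_compose adj_resolvent[OF X e] blinfun_compose_assoc)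
    show "adj B = B" by (rule B(2))
    show "inner ((C o\<^sub>L ?R o\<^sub>L adj C) x) x \<le> inner (B x) x" for x
      using le[of x] by (simp add: inner_adj_right)
  qed
  then show ?thesis
    using eq C R B by (simp add: trace_mono mem_compose mem_adj)
qed

lemma trace_proj_compose_resolvent_le:
  assumes X: "X \<in> M" "pos_op X" and e: "e > 0" and P: "P \<in> M" "is_proj P"
    and dominated: "\<And>w. norm (P w) ^ 2 \<le> inner (X w) w"
  shows "Re (\<tau> (P o\<^sub>L resolvent X e)) \<le> Re (\<tau> P)"
proof -
  have "Re (\<tau> (adj P o\<^sub>L P o\<^sub>L resolvent X e)) \<le> Re (\<tau> P)"
  proof (rule trace_compress_resolvent_le[OF X e P(1) P(1)])
    show "adj P = P" using P(2) by (simp add: is_proj_def)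
    show "inner (resolvent X e (adj P x)) (adj P x) \<le> inner (P x) x" for x
      using inner_resolvent_le_sum[OF X e, of "{()}" "\<lambda>_. P" "P x" "\<lambda>_. P x"] dominated
        is_proj_inner_commute[OF P(2)] is_proj_inner_self[OF P(2)] P(2)
      by (simp add: is_proj_def is_proj_apply_idem)
  qed
  then show ?thesis using P(2) by (simp add: is_proj_def)
qed

lemma meet_projection_trace_le:
  assumes E: "E \<in> M" "is_proj E" and F: "F \<in> M" "is_proj F"
  obtains G where "G \<in> M" "is_proj G" "\<And>x. E (G x) = G x" "\<And>x. F (G x) = G x"
    "Re (\<tau> (id_blinfun - G)) \<le> Re (\<tau> (id_blinfun - E)) + Re (\<tau> (id_blinfun - F))"
proof -
  define P where "P = id_blinfun - E"
  define Q where "Q = id_blinfun - F"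
  have P: "P \<in> M" "is_proj P" and Q: "Q \<in> M" "is_proj Q"
    using E F by (auto simp: P_def Q_def intro: mem_diff mem_id is_proj_compl)
  define X where "X = P + Q"
  have quadratic: "inner (X w) w = norm (P w) ^ 2 + norm (Q w) ^ 2" for w
    using is_proj_inner_self[OF P(2)] is_proj_inner_self[OF Q(2)]
    by (simp add: X_def blinfun.add_left inner_add_left)
  have X: "X \<in> M" "pos_op X"
    using P Q quadratic unfolding X_def pos_op_def is_proj_def by (auto simp: mem_add adj_add)
  define G where "G = ker_proj X"
  have "P (G x) = 0 \<and> Q (G x) = 0" for x
    using quadratic[of "G x"] by (simp add: G_def ker_proj_in_kernel add_nonneg_eq_0_iff)
  then have "E (G x) = G x" "F (G x) = G x" for x
    by (simp_all add: P_def Q_def blinfun.diff_left)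
  moreover have "Re (\<tau> (id_blinfun - G)) \<le> Re (\<tau> P) + Re (\<tau> Q)"
    unfolding G_def
  proof (rule trace_support_le[OF X])
    fix e :: real assume e: "e > 0"
    have "\<tau> (X o\<^sub>L resolvent X e) = \<tau> (P o\<^sub>L resolvent X e) + \<tau> (Q o\<^sub>L resolvent X e)"
      using P Q resolvent_mem[OF X e]
      by (simp add: X_def trace_add mem_compose bounded_bilinear.add_left[OF bounded_bilinear_blinfun_compose])
    then show "Re (\<tau> (X o\<^sub>L resolvent X e)) \<le> Re (\<tau> P) + Re (\<tau> Q)"
      using trace_proj_compose_resolvent_le[OF X e P] trace_proj_compose_resolvent_le[OF X e Q]
        quadratic by simp
  qed
  ultimately show ?thesis
    using that[of G] ker_proj_mem[OF X(1)] is_proj_ker_proj[of X] by (simp add: G_def P_def Q_def)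
qed

lemma finite_meet_projection_trace_le:
  assumes "finite I" "\<forall>i\<in>I. E i \<in> M \<and> is_proj (E i)"
  shows "\<exists>G\<in>M. is_proj G \<and> (\<forall>i\<in>I. \<forall>x. E i (G x) = G x) \<and>
           Re (\<tau> (id_blinfun - G)) \<le> (\<Sum>i\<in>I. Re (\<tau> (id_blinfun - E i)))"
  using assms
proof (induction I rule: finite_induct)
  case empty
  show ?case using mem_id is_proj_id trace_zero by (intro bexI[of _ id_blinfun]) auto
next
  case (insert a I)
  then obtain G where G: "G \<in> M" "is_proj G" "\<forall>i\<in>I. \<forall>x. E i (G x) = G x"
    "Re (\<tau> (id_blinfun - G)) \<le> (\<Sum>i\<in>I. Re (\<tau> (id_blinfun - E i)))" by auto
  have "E a \<in> M" "is_proj (E a)" using insert.prems by auto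
  then obtain H where "H \<in> M" "is_proj H" "\<And>x. E a (H x) = H x" "\<And>x. G (H x) = H x"
    "Re (\<tau> (id_blinfun - H)) \<le> Re (\<tau> (id_blinfun - E a)) + Re (\<tau> (id_blinfun - G))"
    using meet_projection_trace_le G(1,2) by metis
  with G insert.hyps show ?case
    by (intro bexI[of _ H]) (auto, metis)
qed

end

section \<open>The measure topology\<close>

lemma istopology_translated_nbhds:
  fixes N :: "real \<Rightarrow> real \<Rightarrow> 'b set" and add :: "'a \<Rightarrow> 'b \<Rightarrow> 'a"
  assumes mono: "\<And>e d e' d'. e \<le> e' \<Longrightarrow> d \<le> d' \<Longrightarrow> N e d \<subseteq> N e' d'"
  shows "istopology (\<lambda>U. U \<subseteq> S \<and> (\<forall>A\<in>U. \<exists>\<epsilon>>0. \<exists>\<delta>>0. add A ` N \<epsilon> \<delta> \<subseteq> U))"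
  unfolding istopology_def
proof (rule conjI; intro allI impI)
  fix U V assume U: "U \<subseteq> S \<and> (\<forall>A\<in>U. \<exists>\<epsilon>>0. \<exists>\<delta>>0. add A ` N \<epsilon> \<delta> \<subseteq> U)"
    and V: "V \<subseteq> S \<and> (\<forall>A\<in>V. \<exists>\<epsilon>>0. \<exists>\<delta>>0. add A ` N \<epsilon> \<delta> \<subseteq> V)"
  have UV: "U \<inter> V \<subseteq> S" using U by blast
  have "\<forall>A\<in>U \<inter> V. \<exists>\<epsilon>>0. \<exists>\<delta>>0. add A ` N \<epsilon> \<delta> \<subseteq> U \<inter> V"
  proof
    fix A assume "A \<in> U \<inter> V"
    then obtain e1 d1 e2 d2 where "e1 > 0" "d1 > 0" "add A ` N e1 d1 \<subseteq> U" "e2 > 0" "d2 > 0" "add A ` N e2 d2 \<subseteq> V"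
      using U V by (meson IntD1 IntD2)
    moreover have "N (min e1 e2) (min d1 d2) \<subseteq> N e1 d1" "N (min e1 e2) (min d1 d2) \<subseteq> N e2 d2"
      by (simp_all add: mono)
    ultimately have "min e1 e2 > 0 \<and> min d1 d2 > 0 \<and> add A ` N (min e1 e2) (min d1 d2) \<subseteq> U \<inter> V"
      by (meson image_mono le_inf_iff min_less_iff_conj order_trans)
    then show "\<exists>\<epsilon>>0. \<exists>\<delta>>0. add A ` N \<epsilon> \<delta> \<subseteq> U \<inter> V" by blast
  qed
  then show "U \<inter> V \<subseteq> S \<and> (\<forall>A\<in>U \<inter> V. \<exists>\<epsilon>>0. \<exists>\<delta>>0. add A ` N \<epsilon> \<delta> \<subseteq> U \<inter> V)"
    using UV by blast
next
  fix K assume K: "\<forall>U\<in>K. U \<subseteq> S \<and> (\<forall>A\<in>U. \<exists>\<epsilon>>0. \<exists>\<delta>>0. add A ` N \<epsilon> \<delta> \<subseteq> U)"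
  show "\<Union>K \<subseteq> S \<and> (\<forall>A\<in>\<Union>K. \<exists>\<epsilon>>0. \<exists>\<delta>>0. add A ` N \<epsilon> \<delta> \<subseteq> \<Union>K)"
  proof (intro conjI ballI)
    show "\<Union>K \<subseteq> S" using K by blast
    fix A assume "A \<in> \<Union>K"
    then obtain U where "U \<in> K" "A \<in> U" by blast
    then obtain e d where "e > 0" "d > 0" "add A ` N e d \<subseteq> U" using K by blast
    then show "\<exists>\<epsilon>>0. \<exists>\<delta>>0. add A ` N \<epsilon> \<delta> \<subseteq> \<Union>K" using \<open>U \<in> K\<close> by blast
  qed
qed

lemma meas_nbhd_mono: "e \<le> e' \<Longrightarrow> d \<le> d' \<Longrightarrow> meas_nbhd M \<tau> e d \<subseteq> meas_nbhd M \<tau> e' d'"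
  unfolding meas_nbhd_def by fastforce

lemma mat_meas_nbhd_mono: "e \<le> e' \<Longrightarrow> d \<le> d' \<Longrightarrow> mat_meas_nbhd M \<tau> e d \<subseteq> mat_meas_nbhd M \<tau> e' d'"
  unfolding mat_meas_nbhd_def by fastforce

lemma openin_meas_topology:
  "openin (meas_topology M \<tau>) U \<longleftrightarrow>
     U \<subseteq> M \<and> (\<forall>A\<in>U. \<exists>\<epsilon>>0. \<exists>\<delta>>0. (\<lambda>B. A + B) ` meas_nbhd M \<tau> \<epsilon> \<delta> \<subseteq> U)"
proof -
  have "istopology (\<lambda>U. U \<subseteq> M \<and> (\<forall>A\<in>U. \<exists>\<epsilon>>0. \<exists>\<delta>>0. (\<lambda>B. A + B) ` meas_nbhd M \<tau> \<epsilon> \<delta> \<subseteq> U))"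
    by (rule istopology_translated_nbhds[OF meas_nbhd_mono])
  then show ?thesis unfolding meas_topology_def by simp
qed

lemma openin_mat_meas_topology:
  "openin (mat_meas_topology M \<tau> :: ('n::finite, 'h::{real_inner,complete_space}) opmat topology) U \<longleftrightarrow>
     U \<subseteq> mat_alg M \<and> (\<forall>A\<in>U. \<exists>\<epsilon>>0. \<exists>\<delta>>0. (\<lambda>B ij. A ij + B ij) ` mat_meas_nbhd M \<tau> \<epsilon> \<delta> \<subseteq> U)"
proof -
  have "istopology (\<lambda>U. U \<subseteq> (mat_alg M :: ('n, 'h) opmat set) \<and>
      (\<forall>A\<in>U. \<exists>\<epsilon>>0. \<exists>\<delta>>0. (\<lambda>B ij. A ij + B ij) ` mat_meas_nbhd M \<tau> \<epsilon> \<delta> \<subseteq> U))"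
    by (rule istopology_translated_nbhds[OF mat_meas_nbhd_mono])
  then show ?thesis unfolding mat_meas_topology_def by simp
qed

context tracial_vna
begin

lemma zero_mem_meas_nbhd: "e \<ge> 0 \<Longrightarrow> d \<ge> 0 \<Longrightarrow> 0 \<in> meas_nbhd M \<tau> e d"
  unfolding meas_nbhd_def using mem_zero mem_id is_proj_id trace_zero
  by (intro CollectI conjI bexI[of _ id_blinfun]) auto

lemma meas_nbhd_add:
  assumes B: "B \<in> meas_nbhd M \<tau> e1 d1" and C: "C \<in> meas_nbhd M \<tau> e2 d2"
  shows "B + C \<in> meas_nbhd M \<tau> (e1 + e2) (d1 + d2)"
proof -
  obtain E where E: "B \<in> M" "E \<in> M" "is_proj E" "norm (B o\<^sub>L E) \<le> e1" "Re (\<tau> (id_blinfun - E)) \<le> d1"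
    using B unfolding meas_nbhd_def by blast
  obtain F where F: "C \<in> M" "F \<in> M" "is_proj F" "norm (C o\<^sub>L F) \<le> e2" "Re (\<tau> (id_blinfun - F)) \<le> d2"
    using C unfolding meas_nbhd_def by blast
  obtain G where G: "G \<in> M" "is_proj G" "\<And>x. E (G x) = G x" "\<And>x. F (G x) = G x"
    "Re (\<tau> (id_blinfun - G)) \<le> Re (\<tau> (id_blinfun - E)) + Re (\<tau> (id_blinfun - F))"
    using meet_projection_trace_le[OF E(2,3) F(2,3)] by blast
  have "(B + C) o\<^sub>L G = (B o\<^sub>L E o\<^sub>L G) + (C o\<^sub>L F o\<^sub>L G)"
    using G(3,4) by (auto intro!: blinfun_eqI simp: blinfun.add_left)
  then have "norm ((B + C) o\<^sub>L G) \<le> norm (B o\<^sub>L E) * norm G + norm (C o\<^sub>L F) * norm G"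
    by (metis norm_blinfun_compose norm_triangle_le add_mono)
  also have "\<dots> \<le> e1 + e2"
  proof -
    have "norm G \<le> 1" using norm_is_proj_le[OF G(2)] by (intro norm_blinfun_bound) simp_all
    then have "norm (B o\<^sub>L E) * norm G \<le> e1" "norm (C o\<^sub>L F) * norm G \<le> e2"
      using E(4) F(4) by (meson mult_right_le_one_le norm_ge_zero order_trans)+
    then show ?thesis by simp
  qed
  finally show ?thesis
    using G E F mem_add[OF E(1) F(1)] unfolding meas_nbhd_def by fastforce
qed

lemma topspace_meas_topology: "topspace (meas_topology M \<tau>) = M"
proof -
  have "openin (meas_topology M \<tau>) M"
    unfolding openin_meas_topology using mem_add
    by (auto simp: meas_nbhd_def intro!: exI[of _ 1])
  then have "M \<subseteq> topspace (meas_topology M \<tau>)"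
    by (rule openin_subset)
  moreover have "topspace (meas_topology M \<tau>) \<subseteq> M"
    using openin_topspace[of "meas_topology M \<tau>"] unfolding openin_meas_topology by blast
  ultimately show ?thesis by blast
qed

lemma meas_nbhd_contains_open:
  assumes A: "A \<in> M" and e: "\<epsilon> > 0" and d: "\<delta> > 0"
  shows "\<exists>V. openin (meas_topology M \<tau>) V \<and> A \<in> V \<and> V \<subseteq> (\<lambda>B. A + B) ` meas_nbhd M \<tau> \<epsilon> \<delta>"
proof -
  let ?N = "meas_nbhd M \<tau>"
  txt \<open>V is open because O(eta/2, kappa/2) + O(eta/2, kappa/2) is contained in O(eta, kappa).\<close>
  define V where "V = {C \<in> M. \<exists>\<eta>>0. \<exists>\<kappa>>0. (\<lambda>B. C + B) ` ?N \<eta> \<kappa> \<subseteq> (\<lambda>B. A + B) ` ?N \<epsilon> \<delta>}"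
  have "openin (meas_topology M \<tau>) V"
    unfolding openin_meas_topology
  proof (intro conjI ballI)
    show "V \<subseteq> M" unfolding V_def by blast
    fix C assume "C \<in> V"
    then obtain \<eta> \<kappa> where C: "C \<in> M" "\<eta> > 0" "\<kappa> > 0" "(\<lambda>B. C + B) ` ?N \<eta> \<kappa> \<subseteq> (\<lambda>B. A + B) ` ?N \<epsilon> \<delta>"
      unfolding V_def by blast
    have "(\<lambda>B. C + B) ` ?N (\<eta>/2) (\<kappa>/2) \<subseteq> V"
    proof
      fix Y assume "Y \<in> (\<lambda>B. C + B) ` ?N (\<eta>/2) (\<kappa>/2)"
      then obtain D where D: "D \<in> ?N (\<eta>/2) (\<kappa>/2)" "Y = C + D" by blast
      have DM: "D \<in> M" using D(1) unfolding meas_nbhd_def by blast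
      have "(\<lambda>B. Y + B) ` ?N (\<eta>/2) (\<kappa>/2) \<subseteq> (\<lambda>B. A + B) ` ?N \<epsilon> \<delta>"
      proof
        fix Z assume "Z \<in> (\<lambda>B. Y + B) ` ?N (\<eta>/2) (\<kappa>/2)"
        then obtain B where B: "B \<in> ?N (\<eta>/2) (\<kappa>/2)" "Z = Y + B" by blast
        have "D + B \<in> ?N (\<eta>/2 + \<eta>/2) (\<kappa>/2 + \<kappa>/2)" by (rule meas_nbhd_add[OF D(1) B(1)])
        then have "D + B \<in> ?N \<eta> \<kappa>" by simp
        then have "C + (D + B) \<in> (\<lambda>B. C + B) ` ?N \<eta> \<kappa>" by blast
        then show "Z \<in> (\<lambda>B. A + B) ` ?N \<epsilon> \<delta>" using C(4) B(2) D(2) by (auto simp: add.assoc)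
      qed
      moreover have "Y \<in> M" using D(2) C(1) DM by (simp add: mem_add)
      ultimately show "Y \<in> V" unfolding V_def using C(2,3) by (intro CollectI conjI exI[of _ "\<eta>/2"] exI[of _ "\<kappa>/2"]) auto
    qed
    moreover have "\<eta>/2 > 0" "\<kappa>/2 > 0" using C(2,3) by auto
    ultimately show "\<exists>\<epsilon>>0. \<exists>\<delta>>0. (\<lambda>B. C + B) ` ?N \<epsilon> \<delta> \<subseteq> V" by blast
  qed
  moreover have "A \<in> V" unfolding V_def using A e d by blast
  moreover have "V \<subseteq> (\<lambda>B. A + B) ` ?N \<epsilon> \<delta>"
  proof
    fix C assume "C \<in> V"
    then obtain \<eta> \<kappa> where C: "\<eta> > 0" "\<kappa> > 0" "(\<lambda>B. C + B) ` ?N \<eta> \<kappa> \<subseteq> (\<lambda>B. A + B) ` ?N \<epsilon> \<delta>"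
      unfolding V_def by blast
    have "C + 0 \<in> (\<lambda>B. C + B) ` ?N \<eta> \<kappa>" using zero_mem_meas_nbhd C(1,2) by (intro imageI) auto
    then show "C \<in> (\<lambda>B. A + B) ` ?N \<epsilon> \<delta>" using C(3) by auto
  qed
  ultimately show ?thesis by blast
qed

end

section \<open>Operator matrices\<close>

lemma dsum_norm_eq_L2_set: "dsum_norm x = L2_set (\<lambda>i. norm (x i)) UNIV"
  unfolding dsum_norm_def L2_set_def ..

context
  fixes x :: "'n::finite \<Rightarrow> 'h::{real_inner,complete_space}"
begin

lemma norm_le_dsum_norm: "norm (x i) \<le> dsum_norm x"
  unfolding dsum_norm_eq_L2_set by (rule member_le_L2_set) auto

lemma dsum_norm_le_sum: "dsum_norm x \<le> (\<Sum>i\<in>UNIV. norm (x i))"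
  unfolding dsum_norm_eq_L2_set by (rule L2_set_le_sum) simp

lemma dsum_norm_scaleR: "dsum_norm (\<lambda>i. c *\<^sub>R x i) = \<bar>c\<bar> * dsum_norm x"
  unfolding dsum_norm_eq_L2_set by (simp add: L2_set_right_distrib)

lemma dsum_norm_eq_0_iff: "dsum_norm x = 0 \<longleftrightarrow> x = (\<lambda>i. 0)"
  unfolding dsum_norm_eq_L2_set by (auto simp: L2_set_eq_0_iff fun_eq_iff)

end

lemma dsum_norm_single:
  "dsum_norm (\<lambda>l::'n::finite. if l = j then v else (0::'h::{real_inner,complete_space})) = norm v"
  unfolding dsum_norm_def by (simp add: if_distrib[of norm] if_distrib[of "\<lambda>x. x ^ 2"] cong: if_cong)

lemma mat_apply_single: "mat_apply A (\<lambda>l. if l = j then y else 0) i = A (i, j) y"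
  unfolding mat_apply_def by (simp add: if_distrib[of "blinfun_apply _"] cong: if_cong)

lemma mat_apply_mult: "mat_apply (mat_mult A B) x = mat_apply A (mat_apply B x)"
  unfolding mat_apply_def mat_mult_def
  by (auto simp: fun_eq_iff blinfun.sum_left blinfun.sum_right intro: sum.swap)

lemma dsum_norm_mat_apply_le:
  fixes A :: "('n::finite, 'h::{real_inner,complete_space}) opmat"
  shows "dsum_norm (mat_apply A x) \<le> (\<Sum>i\<in>UNIV. \<Sum>j\<in>UNIV. norm (A (i, j))) * dsum_norm x"
proof -
  have "norm (mat_apply A x i) \<le> (\<Sum>j\<in>UNIV. norm (A (i, j))) * dsum_norm x" for i
  proof -
    have "norm (mat_apply A x i) \<le> (\<Sum>j\<in>UNIV. norm (A (i, j)) * norm (x j))"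
      unfolding mat_apply_def by (intro order_trans[OF norm_sum] sum_mono norm_blinfun)
    also have "\<dots> \<le> (\<Sum>j\<in>UNIV. norm (A (i, j)) * dsum_norm x)"
      by (intro sum_mono mult_left_mono norm_le_dsum_norm) simp
    finally show ?thesis by (simp add: sum_distrib_right)
  qed
  then have "(\<Sum>i\<in>UNIV. norm (mat_apply A x i)) \<le> (\<Sum>i\<in>UNIV. (\<Sum>j\<in>UNIV. norm (A (i, j))) * dsum_norm x)"
    by (intro sum_mono)
  then show ?thesis
    using dsum_norm_le_sum[of "mat_apply A x"] by (simp add: sum_distrib_right)
qed

context
  fixes A :: "('n::finite, 'h::{real_inner,complete_space}) opmat"
begin

lemma mat_norm_ge: "dsum_norm x \<le> 1 \<Longrightarrow> dsum_norm (mat_apply A x) \<le> mat_norm A"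
  unfolding mat_norm_def
proof (rule cSup_upper)
  show "bdd_above {dsum_norm (mat_apply A x) | x. dsum_norm x \<le> 1}"
  proof (rule bdd_aboveI)
    fix r assume "r \<in> {dsum_norm (mat_apply A x) | x. dsum_norm x \<le> 1}"
    then obtain x where x: "r = dsum_norm (mat_apply A x)" "dsum_norm x \<le> 1" by blast
    then have "r \<le> (\<Sum>i\<in>UNIV. \<Sum>j\<in>UNIV. norm (A (i, j))) * dsum_norm x"
      using dsum_norm_mat_apply_le[of A x] by simp
    also have "\<dots> \<le> (\<Sum>i\<in>UNIV. \<Sum>j\<in>UNIV. norm (A (i, j))) * 1"
      using x(2) by (intro mult_left_mono) (simp_all add: sum_nonneg)
    finally show "r \<le> (\<Sum>i\<in>UNIV. \<Sum>j\<in>UNIV. norm (A (i, j)))" by simp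
  qed
qed auto

lemma mat_norm_le:
  assumes "\<And>x. dsum_norm x \<le> 1 \<Longrightarrow> dsum_norm (mat_apply A x) \<le> c"
  shows "mat_norm A \<le> c"
  unfolding mat_norm_def
proof (rule cSup_least)
  have "dsum_norm (\<lambda>_::'n. 0::'h) \<le> 1" using dsum_norm_eq_0_iff[of "\<lambda>_::'n. 0::'h"] by simp
  then show "{dsum_norm (mat_apply A x) | x. dsum_norm x \<le> 1} \<noteq> {}" by blast
qed (use assms in blast)

lemma mat_norm_nonneg: "0 \<le> mat_norm A"
  using mat_norm_ge[of "\<lambda>_. 0"] dsum_norm_eq_0_iff[of "\<lambda>_::'n. 0::'h"]
  by (simp add: mat_apply_def)

lemma dsum_norm_mat_apply_le_mat_norm: "dsum_norm (mat_apply A x) \<le> mat_norm A * dsum_norm x"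
proof (cases "dsum_norm x = 0")
  case True
  then have "x = (\<lambda>i. 0)" by (simp add: dsum_norm_eq_0_iff)
  then show ?thesis by (simp add: mat_apply_def dsum_norm_def)
next
  case False
  define d where "d = dsum_norm x"
  have "d > 0" using False dsum_norm_eq_0_iff[of x] unfolding d_def
    by (metis dsum_norm_def real_sqrt_ge_zero sum_nonneg zero_le_power2 order_le_less)
  have "dsum_norm (mat_apply A (\<lambda>i. (1 / d) *\<^sub>R x i)) \<le> mat_norm A"
    using \<open>d > 0\<close> by (intro mat_norm_ge) (simp add: dsum_norm_scaleR d_def)
  moreover have "mat_apply A (\<lambda>i. (1 / d) *\<^sub>R x i) = (\<lambda>i. (1 / d) *\<^sub>R mat_apply A x i)"
    unfolding mat_apply_def by (simp add: blinfun.scaleR_right scaleR_sum_right)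
  ultimately show ?thesis
    using \<open>d > 0\<close> by (simp add: dsum_norm_scaleR d_def divide_le_eq mult.commute)
qed

end

context
  fixes P :: "('n::finite, 'h::{real_inner,complete_space}) opmat"
  assumes P: "mat_is_proj P"
begin

lemma mat_is_proj_adj_entry: "adj (P (k, l)) = P (l, k)"
  using P unfolding mat_is_proj_def mat_adj_def by (metis case_prod_conv)

lemma mat_is_proj_entry_sum: "(\<Sum>m\<in>UNIV. P (k, m) (P (m, l) x)) = P (k, l) x"
proof -
  have "mat_mult P P (k, l) = P (k, l)" using P unfolding mat_is_proj_def by simp
  then have "(\<Sum>m\<in>UNIV. P (k, m) o\<^sub>L P (m, l)) x = P (k, l) x"
    unfolding mat_mult_def by simp
  then show ?thesis by (simp add: blinfun.sum_left)
qed

lemma mat_is_proj_inner_diag: "inner (P (j, j) x) x = (\<Sum>l\<in>UNIV. norm (P (l, j) x) ^ 2)"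
proof -
  have "inner (P (j, j) x) x = (\<Sum>l\<in>UNIV. inner (P (j, l) (P (l, j) x)) x)"
    by (simp only: mat_is_proj_entry_sum[of j j x, symmetric] inner_sum_left)
  also have "\<dots> = (\<Sum>l\<in>UNIV. norm (P (l, j) x) ^ 2)"
    by (simp add: inner_adj_right mat_is_proj_adj_entry power2_norm_eq_inner)
  finally show ?thesis .
qed

end

lemma mat_id_minus_apply: "(mat_id (i, j) - E (i, j)) y = (if i = j then y else 0) - E (i, j) y"
  unfolding mat_id_def by (simp add: blinfun.diff_left)

lemma mat_is_proj_compl:
  assumes E: "mat_is_proj E"
  shows "mat_is_proj (\<lambda>ij. mat_id ij - E ij)"
  unfolding mat_is_proj_def
proof
  show "mat_mult (\<lambda>ij. mat_id ij - E ij) (\<lambda>ij. mat_id ij - E ij) = (\<lambda>ij. mat_id ij - E ij)"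
  proof (intro ext blinfun_eqI, clarify)
    fix i k x
    let ?Q = "\<lambda>ij. mat_id ij - E ij"
    have "(\<Sum>j\<in>UNIV. ?Q (i, j) (?Q (j, k) x)) =
        (\<Sum>j\<in>UNIV. (if i = j then ?Q (j, k) x else 0) - E (i, j) (?Q (j, k) x))"
      by (intro sum.cong refl) (rule mat_id_minus_apply)
    also have "\<dots> = ?Q (i, k) x - (\<Sum>j\<in>UNIV. E (i, j) (?Q (j, k) x))"
      by (simp add: sum_subtractf)
    also have "(\<Sum>j\<in>UNIV. E (i, j) (?Q (j, k) x)) = E (i, k) x - E (i, k) x"
      by (simp add: mat_id_minus_apply blinfun.diff_right sum_subtractf mat_is_proj_entry_sum[OF E]
          if_distrib[of "blinfun_apply _"] cong: if_cong)
    finally show "mat_mult ?Q ?Q (i, k) x = ?Q (i, k) x"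
      unfolding mat_mult_def by (simp add: blinfun.sum_left)
  qed
  show "mat_adj (\<lambda>ij. mat_id ij - E ij) = (\<lambda>ij. mat_id ij - E ij)"
    unfolding mat_adj_def mat_id_def by (auto simp: adj_diff mat_is_proj_adj_entry[OF E])
qed

lemma mat_is_proj_fixes_slot:
  assumes E: "mat_is_proj E" and y: "(mat_id (j, j) - E (j, j)) y = 0"
  shows "mat_apply E (\<lambda>l. if l = j then y else 0) = (\<lambda>l. if l = j then y else 0)"
proof -
  have "(\<Sum>l\<in>UNIV. norm ((mat_id (l, j) - E (l, j)) y) ^ 2) = 0"
    using mat_is_proj_inner_diag[OF mat_is_proj_compl[OF E], of j y] y by simp
  then have "(mat_id (l, j) - E (l, j)) y = 0" for l
    by (simp add: sum_nonneg_eq_0_iff)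
  then have "(if l = j then y else 0) - E (l, j) y = 0" for l
    by (simp only: mat_id_minus_apply)
  then have "E (l, j) y = (if l = j then y else 0)" for l
    by (simp only: right_minus_eq)
  then show ?thesis
    by (simp add: fun_eq_iff mat_apply_single)
qed

definition mat_diag :: "('h::{real_inner,complete_space} \<Rightarrow>\<^sub>L 'h) \<Rightarrow> ('n::finite, 'h) opmat" where
  "mat_diag G = (\<lambda>(i, j). if i = j then G else 0)"

lemma mat_apply_diag: "mat_apply (mat_diag G) x = (\<lambda>j. G (x j))"
  unfolding mat_apply_def mat_diag_def by (simp add: if_distrib[of "\<lambda>T. blinfun_apply T _"] cong: if_cong)

lemma mat_is_proj_diag:
  assumes "is_proj G"
  shows "mat_is_proj (mat_diag G :: ('n::finite, 'h::{real_inner,complete_space}) opmat)"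
  unfolding mat_is_proj_def
proof
  show "mat_mult (mat_diag G) (mat_diag G) = (mat_diag G :: ('n, 'h) opmat)"
    using assms unfolding mat_mult_def mat_diag_def is_proj_def
    by (auto simp: fun_eq_iff if_distrib[of "\<lambda>T. T o\<^sub>L _"] cong: if_cong)
  show "mat_adj (mat_diag G) = (mat_diag G :: ('n, 'h) opmat)"
    using assms unfolding mat_adj_def mat_diag_def is_proj_def by auto
qed

lemma mat_trace_id_minus_diag:
  "mat_trace \<tau> (\<lambda>ij. mat_id ij - (mat_diag G :: ('n::finite, 'h::{real_inner,complete_space}) opmat) ij)
     = \<tau> (id_blinfun - G)"
  unfolding mat_trace_def mat_id_def mat_diag_def by simp

lemma mat_norm_mult_diag_le:
  fixes B E :: "('n::finite, 'h::{real_inner,complete_space}) opmat"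
  assumes G: "is_proj G" and EG: "\<And>ij x. E ij (G x) = G x" and BE: "\<And>ij. norm (B ij o\<^sub>L E ij) \<le> \<epsilon>"
  shows "mat_norm (mat_mult B (mat_diag G)) \<le> real CARD('n) ^ 2 * \<epsilon>"
proof (rule mat_norm_le)
  define n where "n = real CARD('n)"
  have "0 \<le> \<epsilon>" using BE norm_ge_zero order_trans by blast
  fix x :: "'n \<Rightarrow> 'h" assume x: "dsum_norm x \<le> 1"
  have "norm (mat_apply (mat_mult B (mat_diag G)) x i) \<le> n * \<epsilon>" for i
  proof -
    have "mat_apply (mat_mult B (mat_diag G)) x i = mat_apply B (\<lambda>j. G (x j)) i"
      by (simp add: mat_apply_mult mat_apply_diag)
    also have "\<dots> = (\<Sum>j\<in>UNIV. (B (i, j) o\<^sub>L E (i, j)) (G (x j)))"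
      using EG by (simp add: mat_apply_def)
    also have "norm \<dots> \<le> (\<Sum>j\<in>(UNIV::'n set). \<epsilon>)"
    proof (intro order_trans[OF norm_sum] sum_mono order_trans[OF norm_blinfun])
      fix j
      have "norm (G (x j)) \<le> 1"
        using norm_is_proj_le[OF G] norm_le_dsum_norm[of x j] x by (meson order_trans)
      then show "norm (B (i, j) o\<^sub>L E (i, j)) * norm (G (x j)) \<le> \<epsilon>"
        using BE \<open>0 \<le> \<epsilon>\<close> by (meson mult_right_le_one_le norm_ge_zero order_trans)
    qed
    finally show ?thesis by (simp add: n_def)
  qed
  then have "dsum_norm (mat_apply (mat_mult B (mat_diag G)) x) \<le> (\<Sum>i\<in>(UNIV::'n set). n * \<epsilon>)"
    by (intro order_trans[OF dsum_norm_le_sum] sum_mono)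
  then show "dsum_norm (mat_apply (mat_mult B (mat_diag G)) x) \<le> real CARD('n) ^ 2 * \<epsilon>"
    by (simp add: n_def power2_eq_square)
qed

section \<open>Comparison of the neighbourhood bases\<close>

context tracial_vna
begin

lemma mat_diag_mem: "G \<in> M \<Longrightarrow> mat_diag G \<in> mat_alg M"
  unfolding mat_alg_def mat_diag_def by (auto simp: mem_zero)

lemma mat_id_minus_mem: "E \<in> mat_alg M \<Longrightarrow> mat_id ij - E ij \<in> M"
  unfolding mat_alg_def mat_id_def by (auto simp: mem_diff mem_id mem_zero split: prod.split)

text \<open>Writing P for a projection matrix, P (j, j) is the sum of the operators P (l, j)* P (l, j),
  and P (l, j) (P (j, j) + e)^-1 P (l, j)* \<le> P (l, l).\<close>

lemma trace_ker_proj_diag_le: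
  fixes P :: "('n::finite, 'h) opmat"
  assumes P: "P \<in> mat_alg M" "mat_is_proj P"
  shows "Re (\<tau> (id_blinfun - ker_proj (P (j, j)))) \<le> (\<Sum>l\<in>UNIV. Re (\<tau> (P (l, l))))"
proof -
  have mem: "P kl \<in> M" for kl using P(1) by (cases kl) (simp add: mat_alg_def)
  let ?X = "P (j, j)"
  have X: "?X \<in> M" "pos_op ?X"
    using mem mat_is_proj_adj_entry[OF P(2)] mat_is_proj_inner_diag[OF P(2)]
    by (auto simp: pos_op_def intro: sum_nonneg)
  show ?thesis
  proof (rule trace_support_le[OF X])
    fix e :: real assume e: "e > 0"
    let ?R = "resolvent ?X e"
    have "?X = (\<Sum>l\<in>UNIV. adj (P (l, j)) o\<^sub>L P (l, j))"
      by (rule blinfun_eqI) (simp add: blinfun.sum_left mat_is_proj_adj_entry[OF P(2)] mat_is_proj_entry_sum[OF P(2)])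
    then have "\<tau> (?X o\<^sub>L ?R) = (\<Sum>l\<in>UNIV. \<tau> (adj (P (l, j)) o\<^sub>L P (l, j) o\<^sub>L ?R))"
      using mem resolvent_mem[OF X e]
      by (simp add: bounded_bilinear.sum_left[OF bounded_bilinear_blinfun_compose] trace_sum mem_compose mem_adj)
    then have "Re (\<tau> (?X o\<^sub>L ?R)) = (\<Sum>l\<in>UNIV. Re (\<tau> (adj (P (l, j)) o\<^sub>L P (l, j) o\<^sub>L ?R)))"
      by simp
    also have "\<dots> \<le> (\<Sum>l\<in>UNIV. Re (\<tau> (P (l, l))))"
    proof (rule sum_mono, rule trace_compress_resolvent_le[OF X e mem mem])
      fix l x
      show "adj (P (l, l)) = P (l, l)" by (rule mat_is_proj_adj_entry[OF P(2)])
      have "inner (P (j, l) x) w = (\<Sum>m\<in>UNIV. inner (P (m, l) x) (P (m, j) w))" for w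
        by (simp add: inner_sum_left inner_adj_right mat_is_proj_adj_entry[OF P(2)]
            flip: mat_is_proj_entry_sum[OF P(2), of j l x])
      then show "inner (?R (adj (P (l, j)) x)) (adj (P (l, j)) x) \<le> inner (P (l, l) x) x"
        using inner_resolvent_le_sum[OF X e, of UNIV "\<lambda>m. P (m, j)" "P (j, l) x" "\<lambda>m. P (m, l) x"]
        by (simp add: mat_is_proj_adj_entry[OF P(2)] mat_is_proj_inner_diag[OF P(2)])
    qed
    finally show "Re (\<tau> (?X o\<^sub>L ?R)) \<le> (\<Sum>l\<in>UNIV. Re (\<tau> (P (l, l))))" .
  qed
qed

lemma mat_meas_nbhd_entry:
  fixes B :: "('n::finite, 'h) opmat"
  assumes "B \<in> mat_meas_nbhd M \<tau> \<epsilon> \<delta>"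
  shows "B (i, j) \<in> meas_nbhd M \<tau> \<epsilon> (real CARD('n) * \<delta>)"
proof -
  obtain E where B: "B \<in> mat_alg M" and E: "E \<in> mat_alg M" "mat_is_proj E"
    and BE: "mat_norm (mat_mult B E) \<le> \<epsilon>" and trE: "Re (mat_trace \<tau> (\<lambda>ij. mat_id ij - E ij)) \<le> \<delta>"
    using assms unfolding mat_meas_nbhd_def by blast
  define Q where "Q = (\<lambda>ij. mat_id ij - E ij)"
  have Q: "Q \<in> mat_alg M" "mat_is_proj Q"
    using E mat_id_minus_mem mat_is_proj_compl by (auto simp: Q_def mat_alg_def)
  define F where "F = ker_proj (Q (j, j))"
  have "0 \<le> \<epsilon>" using BE mat_norm_nonneg[of "mat_mult B E"] by linarith
  have "norm (B (i, j) o\<^sub>L F) \<le> \<epsilon>"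
  proof (rule norm_blinfun_bound[OF \<open>0 \<le> \<epsilon>\<close>])
    fix x
    define y where "y = F x"
    let ?v = "\<lambda>l. if l = j then y else 0"
    have "Q (j, j) y = 0"
      by (simp add: y_def F_def ker_proj_in_kernel)
    then have "mat_apply E ?v = ?v"
      unfolding Q_def by (rule mat_is_proj_fixes_slot[OF E(2)])
    then have "B (i, j) y = mat_apply (mat_mult B E) ?v i"
      by (simp add: mat_apply_mult mat_apply_single)
    then have "norm (B (i, j) y) \<le> dsum_norm (mat_apply (mat_mult B E) ?v)"
      by (simp add: norm_le_dsum_norm)
    also have "\<dots> \<le> mat_norm (mat_mult B E) * dsum_norm ?v"
      by (rule dsum_norm_mat_apply_le_mat_norm)
    also have "\<dots> = mat_norm (mat_mult B E) * norm y"
      by (simp only: dsum_norm_single)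
    also have "\<dots> \<le> \<epsilon> * norm x"
      using BE mat_norm_nonneg norm_is_proj_le[OF is_proj_ker_proj, of _ x] \<open>0 \<le> \<epsilon>\<close>
      by (intro mult_mono) (auto simp: y_def F_def)
    finally show "norm ((B (i, j) o\<^sub>L F) x) \<le> \<epsilon> * norm x" by (simp add: y_def)
  qed
  moreover have "Re (\<tau> (id_blinfun - F)) \<le> real CARD('n) * \<delta>"
  proof -
    have "(\<Sum>l\<in>UNIV. Re (\<tau> (Q (l, l)))) = real CARD('n) * Re (mat_trace \<tau> Q)"
      by (simp add: mat_trace_def)
    moreover have "real CARD('n) * Re (mat_trace \<tau> Q) \<le> real CARD('n) * \<delta>"
      using trE by (simp add: Q_def)
    ultimately show ?thesis
      using trace_ker_proj_diag_le[OF Q, of j] unfolding F_def by linarith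
  qed
  moreover have "B (i, j) \<in> M" "F \<in> M"
    using B Q(1) ker_proj_mem by (simp_all add: mat_alg_def F_def)
  ultimately show ?thesis
    unfolding meas_nbhd_def using is_proj_ker_proj[of "Q (j, j)"]
    by (intro CollectI conjI bexI[of _ F]) (simp_all add: F_def)
qed

lemma mat_meas_nbhd_of_entries:
  fixes B :: "('n::finite, 'h) opmat"
  assumes B: "\<And>ij. B ij \<in> meas_nbhd M \<tau> \<epsilon> \<delta>"
  shows "B \<in> mat_meas_nbhd M \<tau> (real CARD('n) ^ 2 * \<epsilon>) (real CARD('n) ^ 2 * \<delta>)"
proof -
  define n where "n = real CARD('n)"
  have "\<forall>ij. \<exists>E. E \<in> M \<and> is_proj E \<and> norm (B ij o\<^sub>L E) \<le> \<epsilon> \<and> Re (\<tau> (id_blinfun - E)) \<le> \<delta>"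
    using B unfolding meas_nbhd_def by blast
  then obtain E where E: "\<And>ij. E ij \<in> M" "\<And>ij. is_proj (E ij)" "\<And>ij. norm (B ij o\<^sub>L E ij) \<le> \<epsilon>"
    "\<And>ij. Re (\<tau> (id_blinfun - E ij)) \<le> \<delta>"
    by metis
  obtain G where G: "G \<in> M" "is_proj G" "\<forall>ij\<in>UNIV. \<forall>x. E ij (G x) = G x"
    "Re (\<tau> (id_blinfun - G)) \<le> (\<Sum>ij\<in>UNIV. Re (\<tau> (id_blinfun - E ij)))"
    using finite_meet_projection_trace_le[of UNIV E] E(1,2) by auto
  have "E ij (G x) = G x" for ij x
    using G(3) by blast
  then have "mat_norm (mat_mult B (mat_diag G)) \<le> n ^ 2 * \<epsilon>"
    unfolding n_def using E(3) by (rule mat_norm_mult_diag_le[OF G(2)])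
  moreover have "Re (mat_trace \<tau> (\<lambda>ij. mat_id ij - mat_diag G ij)) \<le> n ^ 2 * \<delta>"
  proof -
    have "(\<Sum>ij\<in>UNIV. Re (\<tau> (id_blinfun - E ij))) \<le> (\<Sum>ij\<in>(UNIV :: ('n \<times> 'n) set). \<delta>)"
      by (rule sum_mono) (rule E(4))
    also have "\<dots> = n ^ 2 * \<delta>"
      by (simp add: n_def power2_eq_square card_cartesian_product flip: UNIV_Times_UNIV)
    finally show ?thesis using G(4) by (simp add: mat_trace_id_minus_diag)
  qed
  moreover have "B \<in> mat_alg M"
    using B by (simp add: mat_alg_def meas_nbhd_def)
  ultimately show ?thesis
    unfolding mat_meas_nbhd_def n_def using mat_diag_mem[OF G(1)] mat_is_proj_diag[OF G(2)]
    by (intro CollectI conjI bexI[of _ "mat_diag G"])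
qed

lemma topspace_product_meas_topology:
  "topspace (product_topology (\<lambda>_::'n::finite \<times> 'n. meas_topology M \<tau>) UNIV) = (mat_alg M :: ('n, 'h) opmat set)"
  unfolding topspace_product_topology topspace_meas_topology mat_alg_def
  by (auto simp: PiE_UNIV_domain Pi_iff)

lemma openin_mat_meas_if_openin_product:
  assumes S: "openin (product_topology (\<lambda>_::'n::finite \<times> 'n. meas_topology M \<tau>) UNIV) S"
  shows "openin (mat_meas_topology M \<tau> :: ('n, 'h) opmat topology) S"
  unfolding openin_mat_meas_topology
proof (intro conjI ballI)
  show "S \<subseteq> mat_alg M"
    using openin_subset[OF S] unfolding topspace_product_meas_topology .
  fix A assume "A \<in> S"
  then obtain U where U: "\<forall>ij\<in>UNIV. openin (meas_topology M \<tau>) (U ij)" "A \<in> Pi\<^sub>E UNIV U" "Pi\<^sub>E UNIV U \<subseteq> S"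
    using S unfolding openin_product_topology_alt by blast
  have "A ij \<in> U ij" for ij
    using U(2) unfolding PiE_UNIV_domain Pi_iff by blast
  then have "\<forall>ij. \<exists>\<epsilon>>0. \<exists>\<delta>>0. (\<lambda>B. A ij + B) ` meas_nbhd M \<tau> \<epsilon> \<delta> \<subseteq> U ij"
    using U(1) unfolding openin_meas_topology by blast
  then obtain ef df where ed: "\<And>ij. ef ij > 0" "\<And>ij. df ij > 0"
    "\<And>ij. (\<lambda>B. A ij + B) ` meas_nbhd M \<tau> (ef ij) (df ij) \<subseteq> U ij"
    by metis
  define \<epsilon> where "\<epsilon> = Min (range ef)"
  define \<delta> where "\<delta> = Min (range df)"
  have "\<epsilon> > 0" "\<delta> > 0" using ed(1,2) by (auto simp: \<epsilon>_def \<delta>_def)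
  have le: "\<epsilon> \<le> ef ij" "\<delta> \<le> df ij" for ij by (auto simp: \<epsilon>_def \<delta>_def)
  have "(\<lambda>B ij. A ij + B ij) ` mat_meas_nbhd M \<tau> \<epsilon> (\<delta> / real CARD('n)) \<subseteq> S"
  proof clarify
    fix B :: "('n, 'h) opmat" assume "B \<in> mat_meas_nbhd M \<tau> \<epsilon> (\<delta> / real CARD('n))"
    then have "B ij \<in> meas_nbhd M \<tau> \<epsilon> \<delta>" for ij
      using mat_meas_nbhd_entry[of B \<epsilon> "\<delta> / real CARD('n)" "fst ij" "snd ij"] by simp
    then have "B ij \<in> meas_nbhd M \<tau> (ef ij) (df ij)" for ij
      using meas_nbhd_mono[OF le] by blast
    then have "A ij + B ij \<in> U ij" for ij
      using ed(3) by blast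
    then have "(\<lambda>ij. A ij + B ij) \<in> Pi\<^sub>E UNIV U"
      unfolding PiE_UNIV_domain Pi_iff by blast
    then show "(\<lambda>ij. A ij + B ij) \<in> S" using U(3) by blast
  qed
  moreover have "\<delta> / real CARD('n) > 0" using \<open>\<delta> > 0\<close> by simp
  ultimately show "\<exists>\<epsilon>>0. \<exists>\<delta>>0. (\<lambda>B ij. A ij + B ij) ` mat_meas_nbhd M \<tau> \<epsilon> \<delta> \<subseteq> S"
    using \<open>\<epsilon> > 0\<close> by blast
qed

lemma openin_product_if_openin_mat_meas:
  assumes S: "openin (mat_meas_topology M \<tau> :: ('n::finite, 'h) opmat topology) S"
  shows "openin (product_topology (\<lambda>_::'n \<times> 'n. meas_topology M \<tau>) UNIV) S"
  unfolding openin_product_topology_alt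
proof
  fix A assume "A \<in> S"
  then obtain \<epsilon> \<delta> where "\<epsilon> > 0" "\<delta> > 0" and sub: "(\<lambda>B ij. A ij + B ij) ` mat_meas_nbhd M \<tau> \<epsilon> \<delta> \<subseteq> S"
    using S unfolding openin_mat_meas_topology by blast
  have "A ij \<in> M" for ij
    using S \<open>A \<in> S\<close> unfolding openin_mat_meas_topology mat_alg_def by (cases ij) blast
  define n where "n = real CARD('n)"
  have "n > 0" by (simp add: n_def)
  then have "\<forall>ij. \<exists>V. openin (meas_topology M \<tau>) V \<and> A ij \<in> V \<and>
      V \<subseteq> (\<lambda>B. A ij + B) ` meas_nbhd M \<tau> (\<epsilon> / n ^ 2) (\<delta> / n ^ 2)"
    using meas_nbhd_contains_open[OF \<open>A _ \<in> M\<close>] \<open>\<epsilon> > 0\<close> \<open>\<delta> > 0\<close> by simp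
  then obtain V where V: "\<And>ij. openin (meas_topology M \<tau>) (V ij)" "\<And>ij. A ij \<in> V ij"
    "\<And>ij. V ij \<subseteq> (\<lambda>B. A ij + B) ` meas_nbhd M \<tau> (\<epsilon> / n ^ 2) (\<delta> / n ^ 2)"
    by metis
  have "C \<in> S" if "C \<in> Pi\<^sub>E UNIV V" for C
  proof -
    have "C ij - A ij \<in> meas_nbhd M \<tau> (\<epsilon> / n ^ 2) (\<delta> / n ^ 2)" for ij
    proof -
      have "C ij \<in> V ij" using that unfolding PiE_UNIV_domain Pi_iff by blast
      then obtain b where "b \<in> meas_nbhd M \<tau> (\<epsilon> / n ^ 2) (\<delta> / n ^ 2)" "C ij = A ij + b"
        using V(3) by blast
      then show ?thesis by simp
    qed
    then have "(\<lambda>ij. C ij - A ij) \<in> mat_meas_nbhd M \<tau> (n ^ 2 * (\<epsilon> / n ^ 2)) (n ^ 2 * (\<delta> / n ^ 2))"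
      unfolding n_def by (rule mat_meas_nbhd_of_entries)
    then have "(\<lambda>ij. C ij - A ij) \<in> mat_meas_nbhd M \<tau> \<epsilon> \<delta>"
      using \<open>n > 0\<close> by simp
    then show "C \<in> S"
      using sub by (force simp: image_iff)
  qed
  then show "\<exists>U. finite {i \<in> UNIV. U i \<noteq> topspace (meas_topology M \<tau>)} \<and>
      (\<forall>i\<in>UNIV. openin (meas_topology M \<tau>) (U i)) \<and> A \<in> Pi\<^sub>E UNIV U \<and> Pi\<^sub>E UNIV U \<subseteq> S"
    using V(1,2) by (intro exI[of _ V]) (auto simp: PiE_UNIV_domain Pi_iff)
qed

lemma product_topology_eq_mat_meas_topology:
  "product_topology (\<lambda>_::'n::finite \<times> 'n. meas_topology M \<tau>) UNIV
     = (mat_meas_topology M \<tau> :: ('n, 'h) opmat topology)"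
  using openin_mat_meas_if_openin_product openin_product_if_openin_mat_meas
  by (auto simp: topology_eq)

end

theorem proposition4p3:
  fixes J :: "'h::{real_inner,complete_space} \<Rightarrow>\<^sub>L 'h"
    and M :: "('h \<Rightarrow>\<^sub>L 'h) set"
    and \<tau> :: "('h \<Rightarrow>\<^sub>L 'h) \<Rightarrow> complex"
  assumes "II1_factor J M"
    and "faithful_normal_tracial_state J M \<tau>"
  shows "product_topology (\<lambda>_::'n::finite \<times> 'n. meas_topology M \<tau>) UNIV
           = (mat_meas_topology M \<tau> :: ('n, 'h) opmat topology)"
proof -
  interpret tracial_vna J M \<tau>
    using assms unfolding II1_factor_def factor_def by unfold_locales auto
  show ?thesis by (rule product_topology_eq_mat_meas_topology)
qed

end
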